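(* Let $A$ be a Banach space, give $A^\vee$ the dual norm, let $X$ be a first countable Hausdorff space, and let $\mathcal A=(X,A,\kappa)$ be a quotient vector bundle with $\kappa(x)$ closed for all $x$. Let $\mathcal A^\vee=(X,A^\vee,\kappa^\vee)$ with $\kappa^\vee(x)=F(\kappa(x))$. (1) If $\mathcal A^\vee$ is a quotient vector bundle, then both $\mathcal A$ and $\mathcal A^\vee$ are Banach bundles. (2) If $A$ is reflexive and Fréchet smooth, then $\mathcal A$ is a Banach bundle if and only if $\mathcal A^\vee$ is a Banach bundle.
   Context: Scalars are $\mathbb C$. $A^\vee$ is the space of continuous linear functionals on $A$; $F(V)=\{\phi\in A^\vee:\phi|_V=0\}$. The lower Vietoris topology on the set of subspaces of a normed space $B$ is generated by $\{V:V\cap U\ne\emptyset\}$, $U\subset B$ open. A quotient vector bundle is $(X,B,\kappa)$ with $\kappa$ continuous from $X$ into the subspaces of $B$ with the lower Vietoris topology; its associated linear bundle $E=\coprod_x B/\kappa(x)$ is the quotient of $B\times X$ by $(a,x)\sim(b,x)\iff a-b\in\kappa(x)$, with projection $\pi\colon E\to X$, and carries the fiberwise norm $\|[a,x]\|=\mathrm{dist}(a,\kappa(x))$. We say $(X,B,\kappa)$ is a Banach bundle if $E$ with this norm is a Banach bundle: each fiber is a Banach space, addition and scalar multiplication are continuous, the norm $E\to\mathbb R$ is continuous, and whenever $(e_i)$ is a net with $\|e_i\|\to0$ and $\pi(e_i)\to x$ then $e_i\to 0_x$. $A$ is Fréchet smooth if for each $a$ with $\|a\|=1$, $\lim_{\delta\to0}(\|a-\delta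 b\|-\|a\|)/\delta$ exists uniformly in $b$ with $\|b\|=1$. *)

theory Defs
  imports "HOL-Analysis.Analysis"
begin

class complex_normed_vector = real_normed_vector +
  fixes scaleC :: "complex \<Rightarrow> 'a \<Rightarrow> 'a" (infixr \<open>*\<^sub>C\<close> 75)
  assumes scaleC_add_right: "scaleC c (x + y) = scaleC c x + scaleC c y"
    and scaleC_add_left: "scaleC (c + d) x = scaleC c x + scaleC d x"
    and scaleC_scaleC: "scaleC c (scaleC d x) = scaleC (c * d) x"
    and scaleC_one: "scaleC 1 x = x"
    and scaleR_scaleC: "scaleR r x = scaleC (complex_of_real r) x"
    and norm_scaleC: "norm (scaleC c x) = cmod c * norm x"

instantiation complex :: complex_normed_vector
begin
definition scaleC_complex :: "complex \<Rightarrow> complex \<Rightarrow> complex" where "scaleC_complex c x = c * x"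
instance by standard (auto simp: scaleC_complex_def algebra_simps norm_mult scaleR_conv_of_real)
end

section \<open>Complex subspaces of a normed space B (given as a carrier inside a real normed type,
  with an explicit complex scalar multiplication sm)\<close>

definition csubspace_in :: "'b::real_normed_vector set \<Rightarrow> (complex \<Rightarrow> 'b \<Rightarrow> 'b) \<Rightarrow> 'b set \<Rightarrow> bool" where
  "csubspace_in B sm V \<longleftrightarrow> V \<subseteq> B \<and> 0 \<in> V \<and> (\<forall>u\<in>V. \<forall>v\<in>V. u + v \<in> V) \<and> (\<forall>c. \<forall>v\<in>V. sm c v \<in> V)"

definition lower_vietoris :: "'b::real_normed_vector set \<Rightarrow> (complex \<Rightarrow> 'b \<Rightarrow> 'b) \<Rightarrow> 'b set topology" where
  "lower_vietoris B sm = topology_generated_by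
     {{V. csubspace_in B sm V \<and> V \<inter> U \<noteq> {}} | U. openin (subtopology euclidean B) U}"

definition quotient_vector_bundle ::
  "'x topology \<Rightarrow> 'b::real_normed_vector set \<Rightarrow> (complex \<Rightarrow> 'b \<Rightarrow> 'b) \<Rightarrow> ('x \<Rightarrow> 'b set) \<Rightarrow> bool" where
  "quotient_vector_bundle X B sm \<kappa> \<longleftrightarrow>
     (\<forall>x\<in>topspace X. csubspace_in B sm (\<kappa> x)) \<and> continuous_map X (lower_vietoris B sm) \<kappa>"

section \<open>The associated linear bundle E = coprod_x B / kappa(x)\<close>

text \<open>A point of E is represented as a pair (x, a + kappa(x)).\<close>
definition coset :: "('x \<Rightarrow> 'b::real_normed_vector set) \<Rightarrow> 'x \<Rightarrow> 'b \<Rightarrow> 'x \<times> 'b set" where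
  "coset \<kappa> x a = (x, (\<lambda>v. a + v) ` \<kappa> x)"

definition Etot :: "'x topology \<Rightarrow> 'b::real_normed_vector set \<Rightarrow> ('x \<Rightarrow> 'b set) \<Rightarrow> ('x \<times> 'b set) set" where
  "Etot X B \<kappa> = {coset \<kappa> x a | x a. x \<in> topspace X \<and> a \<in> B}"

definition Eopen :: "'x topology \<Rightarrow> 'b::real_normed_vector set \<Rightarrow> ('x \<Rightarrow> 'b set) \<Rightarrow> ('x \<times> 'b set) set \<Rightarrow> bool" where
  "Eopen X B \<kappa> U \<longleftrightarrow> U \<subseteq> Etot X B \<kappa> \<and>
     openin (prod_topology (subtopology euclidean B) X) {p \<in> B \<times> topspace X. coset \<kappa> (snd p) (fst p) \<in> U}"

lemma istopology_Eopen: "istopology (Eopen X B \<kappa>)"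
  unfolding istopology_def
proof (intro conjI allI impI)
  fix S T assume S: "Eopen X B \<kappa> S" and T: "Eopen X B \<kappa> T"
  have "{p \<in> B \<times> topspace X. coset \<kappa> (snd p) (fst p) \<in> S \<inter> T} =
        {p \<in> B \<times> topspace X. coset \<kappa> (snd p) (fst p) \<in> S} \<inter> {p \<in> B \<times> topspace X. coset \<kappa> (snd p) (fst p) \<in> T}"
    by auto
  then show "Eopen X B \<kappa> (S \<inter> T)" using S T unfolding Eopen_def by auto
next
  fix K assume K: "\<forall>S\<in>K. Eopen X B \<kappa> S"
  have "{p \<in> B \<times> topspace X. coset \<kappa> (snd p) (fst p) \<in> \<Union>K} =
        (\<Union>S\<in>K. {p \<in> B \<times> topspace X. coset \<kappa> (snd p) (fst p) \<in> S})"
    by auto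
  then show "Eopen X B \<kappa> (\<Union>K)" using K unfolding Eopen_def by auto
qed

text \<open>E carries the quotient topology of B \<times> X.\<close>
definition Etop :: "'x topology \<Rightarrow> 'b::real_normed_vector set \<Rightarrow> ('x \<Rightarrow> 'b set) \<Rightarrow> ('x \<times> 'b set) topology" where
  "Etop X B \<kappa> = topology (Eopen X B \<kappa>)"

definition Ezero :: "('x \<Rightarrow> 'b::real_normed_vector set) \<Rightarrow> 'x \<Rightarrow> 'x \<times> 'b set" where
  "Ezero \<kappa> x = (x, \<kappa> x)"

definition Eadd :: "'x \<times> 'b::real_normed_vector set \<Rightarrow> 'x \<times> 'b set \<Rightarrow> 'x \<times> 'b set" where
  "Eadd e f = (fst e, {c + d | c d. c \<in> snd e \<and> d \<in> snd f})"

definition Esmul :: "(complex \<Rightarrow> 'b::real_normed_vector \<Rightarrow> 'b) \<Rightarrow> ('x \<Rightarrow> 'b set) \<Rightarrow> complex \<Rightarrow> 'x \<times> 'b set \<Rightarrow> 'x \<times> 'b set" where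
  "Esmul sm \<kappa> c e = (fst e, {sm c a + v | a v. a \<in> snd e \<and> v \<in> \<kappa> (fst e)})"

definition Esub :: "(complex \<Rightarrow> 'b::real_normed_vector \<Rightarrow> 'b) \<Rightarrow> ('x \<Rightarrow> 'b set) \<Rightarrow> 'x \<times> 'b set \<Rightarrow> 'x \<times> 'b set \<Rightarrow> 'x \<times> 'b set" where
  "Esub sm \<kappa> e f = Eadd e (Esmul sm \<kappa> (-1) f)"

text \<open>Fibrewise norm: \<parallel>[a,x]\<parallel> = dist(a, kappa x) = inf of norms over the coset.\<close>
definition Enorm :: "'x \<times> 'b::real_normed_vector set \<Rightarrow> real" where
  "Enorm e = infdist 0 (snd e)"

definition banach_bundle ::
  "'x topology \<Rightarrow> 'b::real_normed_vector set \<Rightarrow> (complex \<Rightarrow> 'b \<Rightarrow> 'b) \<Rightarrow> ('x \<Rightarrow> 'b set) \<Rightarrow> bool" where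
  "banach_bundle X B sm \<kappa> \<longleftrightarrow>
     \<comment> \<open>each fibre is a Banach space for the fibrewise norm\<close>
     (\<forall>x\<in>topspace X.
        (\<forall>e\<in>Etot X B \<kappa>. fst e = x \<and> Enorm e = 0 \<longrightarrow> e = Ezero \<kappa> x) \<and>
        (\<forall>s::nat \<Rightarrow> 'x \<times> 'b set.
           (\<forall>n. s n \<in> Etot X B \<kappa> \<and> fst (s n) = x) \<and>
           (\<forall>\<epsilon>>0. \<exists>N. \<forall>m\<ge>N. \<forall>n\<ge>N. Enorm (Esub sm \<kappa> (s m) (s n)) < \<epsilon>) \<longrightarrow>
           (\<exists>e\<in>Etot X B \<kappa>. fst e = x \<and> (\<lambda>n. Enorm (Esub sm \<kappa> (s n) e)) \<longlonglongrightarrow> 0))) \<and>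
     \<comment> \<open>addition is continuous on the fibre product E \<times>_X E\<close>
     continuous_map
       (subtopology (prod_topology (Etop X B \<kappa>) (Etop X B \<kappa>))
          {(e, f). e \<in> Etot X B \<kappa> \<and> f \<in> Etot X B \<kappa> \<and> fst e = fst f})
       (Etop X B \<kappa>) (\<lambda>(e, f). Eadd e f) \<and>
     \<comment> \<open>scalar multiplication is continuous\<close>
     continuous_map (prod_topology euclidean (Etop X B \<kappa>)) (Etop X B \<kappa>) (\<lambda>(c, e). Esmul sm \<kappa> c e) \<and>
     \<comment> \<open>the norm is continuous\<close>
     continuous_map (Etop X B \<kappa>) euclideanreal Enorm \<and>
     \<comment> \<open>nets (as filters) with norm tending to 0 and base point tending to x converge to 0_x\<close>
     (\<forall>F x. x \<in> topspace X \<and> eventually (\<lambda>e. e \<in> Etot X B \<kappa>) F \<and>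
            (Enorm \<longlongrightarrow> 0) F \<and> limitin X fst x F \<longrightarrow>
            limitin (Etop X B \<kappa>) (\<lambda>e. e) (Ezero \<kappa> x) F)"

text \<open>Continuous complex-linear functionals on A, as a subset of the bounded real-linear maps
  A \<Rightarrow> complex; the blinfun norm is the operator (dual) norm.\<close>
definition cdual :: "('a::complex_normed_vector \<Rightarrow>\<^sub>L complex) set" where
  "cdual = {f. \<forall>c x. blinfun_apply f (c *\<^sub>C x) = c * blinfun_apply f x}"

definition dual_smul :: "complex \<Rightarrow> ('a::complex_normed_vector \<Rightarrow>\<^sub>L complex) \<Rightarrow> ('a \<Rightarrow>\<^sub>L complex)" where
  "dual_smul c f = blinfun_mult_left c o\<^sub>L f"

definition annih :: "'a::complex_normed_vector set \<Rightarrow> ('a \<Rightarrow>\<^sub>L complex) set" where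
  "annih V = {\<phi> \<in> cdual. \<forall>v\<in>V. blinfun_apply \<phi> v = 0}"

definition reflexive_space :: "'a::complex_normed_vector itself \<Rightarrow> bool" where
  "reflexive_space _ \<longleftrightarrow>
     (\<forall>\<Phi> :: ('a \<Rightarrow>\<^sub>L complex) \<Rightarrow> complex.
        (\<forall>f\<in>cdual. \<forall>g\<in>cdual. \<Phi> (f + g) = \<Phi> f + \<Phi> g) \<and>
        (\<forall>c. \<forall>f\<in>cdual. \<Phi> (dual_smul c f) = c * \<Phi> f) \<and>
        (\<exists>K. \<forall>f\<in>cdual. norm (\<Phi> f) \<le> K * norm f) \<longrightarrow>
        (\<exists>a::'a. \<forall>f\<in>cdual. \<Phi> f = blinfun_apply f a))"

definition frechet_smooth :: "'a::complex_normed_vector itself \<Rightarrow> bool" where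
  "frechet_smooth _ \<longleftrightarrow>
     (\<forall>a::'a. norm a = 1 \<longrightarrow>
        (\<exists>L :: 'a \<Rightarrow> real. \<forall>\<epsilon>>0. \<exists>\<delta>0>0. \<forall>b::'a. norm b = 1 \<longrightarrow>
           (\<forall>\<delta>::real. \<delta> \<noteq> 0 \<and> \<bar>\<delta>\<bar> < \<delta>0 \<longrightarrow>
              \<bar>(norm (a - \<delta> *\<^sub>R b) - norm a) / \<delta> - L b\<bar> < \<epsilon>)))"

end

theory Submission
  imports Defs
begin

text \<open>A quotient vector bundle \<open>(X, B, \<kappa>)\<close> with closed fibres is a Banach bundle as soon as
  every distance function \<open>x \<mapsto> dist (a, \<kappa> x)\<close> is lower semicontinuous: these functions are
  always upper semicontinuous (this is continuity of \<open>\<kappa>\<close> for the lower Vietoris topology), so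
  the norm of \<open>E\<close> becomes continuous, while the fibres \<open>B / \<kappa> x\<close> are complete because \<open>B\<close> is.
  By Hahn--Banach, \<open>dist (a, \<kappa> x)\<close> is attained by a functional of norm at most one in
  \<open>F (\<kappa> x)\<close>, and \<open>dist (\<phi>, F (\<kappa> x))\<close> is the norm of \<open>\<phi>\<close> restricted to \<open>\<kappa> x\<close>. Hence lower
  semicontinuity of \<open>\<kappa>\<^sup>\<vee>\<close> gives lower semicontinuity of the distances to \<open>\<kappa>\<close>, and lower
  semicontinuity of \<open>\<kappa>\<close> gives that of the distances to \<open>\<kappa>\<^sup>\<vee>\<close>; this is (1).

  For (2) it remains to show that \<open>\<kappa>\<^sup>\<vee>\<close> is lower semicontinuous when \<open>\<A>\<close> is a Banach bundle.
  A unit functional \<open>\<psi>\<close> annihilating \<open>\<kappa> x0\<close> attains its norm at a unit vector \<open>a\<close> by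
  reflexivity, so \<open>dist (a, \<kappa> x0) = 1\<close>. If \<open>x n \<rightarrow> x0\<close>, continuity of the distance gives
  functionals annihilating \<open>\<kappa> (x n)\<close> that almost norm \<open>a\<close>, and by Smulian's lemma (Frechet
  smoothness at \<open>a\<close>) they converge to \<open>\<psi>\<close>. First countability lets sequences decide openness.\<close>

section \<open>Hahn--Banach\<close>

definition dominated_linear_graphs ::
  "'v::real_normed_vector set \<Rightarrow> 'v set \<Rightarrow> ('v \<Rightarrow> real) \<Rightarrow> real \<Rightarrow> ('v \<times> real) set set" where
  "dominated_linear_graphs S M f K =
     {G. subspace G \<and> (\<forall>x y z. (x, y) \<in> G \<longrightarrow> (x, z) \<in> G \<longrightarrow> y = z) \<and> fst ` G \<subseteq> S \<and>
         (\<forall>x\<in>M. (x, f x) \<in> G) \<and> (\<forall>(x, y)\<in>G. y \<le> K * norm x)}"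

lemma dominated_value_exists:
  fixes G :: "('v::real_normed_vector \<times> real) set"
  assumes G: "subspace G" and dom: "\<forall>(z, y)\<in>G. y \<le> K * norm z" and K: "K \<ge> 0"
  shows "\<exists>c. \<forall>(z, y)\<in>G. y - K * norm (z - x0) \<le> c \<and> c \<le> K * norm (z + x0) - y"
proof -
  have between: "y - K * norm (z - x0) \<le> K * norm (w + x0) - y'"
    if "(z, y) \<in> G" "(w, y') \<in> G" for z y w y'
  proof -
    have "(z + w, y + y') \<in> G" using subspace_add[OF G that] by simp
    then have "y + y' \<le> K * norm (z + w)" using dom by blast
    also have "\<dots> \<le> K * (norm (z - x0) + norm (w + x0))"
      using K norm_triangle_ineq[of "z - x0" "w + x0"] by (intro mult_left_mono) auto
    finally show ?thesis by (simp add: algebra_simps)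
  qed
  define L where "L = {y - K * norm (z - x0) | z y. (z, y) \<in> G}"
  have "(0, 0) \<in> G" using subspace_0[OF G] by (simp add: zero_prod_def)
  then have "L \<noteq> {}" and "bdd_above L"
    using between[of _ _ 0 0] unfolding L_def bdd_above_def by blast+
  then show ?thesis
    by (intro exI[of _ "Sup L"]) (auto intro!: cSup_upper cSup_least between simp: L_def)
qed

lemma dominated_extension_bound:
  fixes G :: "('v::real_normed_vector \<times> real) set"
  assumes G: "subspace G" and dom: "\<forall>(z, y)\<in>G. y \<le> K * norm z" and K: "K \<ge> 0"
    and c: "\<forall>(z, y)\<in>G. y - K * norm (z - x0) \<le> c \<and> c \<le> K * norm (z + x0) - y"
    and zy: "(z, y) \<in> G"
  shows "y + t * c \<le> K * norm (z + t *\<^sub>R x0)"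
proof -
  have scaled: "(inverse s *\<^sub>R z, inverse s * y) \<in> G" for s
    using subspace_scale[OF G zy, of "inverse s"] by simp
  consider "t = 0" | "t > 0" | "t < 0" by linarith
  then show ?thesis
  proof cases
    case 1
    then show ?thesis using dom zy by auto
  next
    case 2
    have "c \<le> K * norm (inverse t *\<^sub>R z + x0) - inverse t * y" using c scaled[of t] by blast
    then have "y + t * c \<le> K * (t * norm (inverse t *\<^sub>R z + x0))"
      using 2 by (simp add: field_simps)
    moreover have "z + t *\<^sub>R x0 = t *\<^sub>R (inverse t *\<^sub>R z + x0)"
      using 2 by (simp add: scaleR_add_right)
    ultimately show ?thesis using 2 by simp
  next
    case 3
    have "inverse (- t) * y - K * norm (inverse (- t) *\<^sub>R z - x0) \<le> c"
      using c scaled[of "- t"] by blast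
    then have "y + t * c \<le> K * ((- t) * norm (inverse (- t) *\<^sub>R z - x0))"
      using 3 by (simp add: field_simps)
    moreover have "z + t *\<^sub>R x0 = (- t) *\<^sub>R (inverse (- t) *\<^sub>R z - x0)"
      using 3 by (simp add: scaleR_diff_right)
    ultimately show ?thesis using 3 by simp
  qed
qed

lemma dominated_linear_graphsD:
  assumes "G \<in> dominated_linear_graphs S M f K"
  shows "subspace G" and "\<And>x y z. (x, y) \<in> G \<Longrightarrow> (x, z) \<in> G \<Longrightarrow> y = z"
    and "fst ` G \<subseteq> S" and "\<And>x. x \<in> M \<Longrightarrow> (x, f x) \<in> G" and "\<forall>(x, y)\<in>G. y \<le> K * norm x"
  using assms unfolding dominated_linear_graphs_def by blast+

lemma dominated_linear_graph_extend:
  assumes G: "G \<in> dominated_linear_graphs S M f K" and S: "subspace S"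
    and x0: "x0 \<in> S" "x0 \<notin> fst ` G" and K: "K \<ge> 0"
  shows "\<exists>G'\<in>dominated_linear_graphs S M f K. G \<subset> G'"
proof -
  note G = dominated_linear_graphsD[OF G]
  obtain c where c: "\<forall>(z, y)\<in>G. y - K * norm (z - x0) \<le> c \<and> c \<le> K * norm (z + x0) - y"
    using dominated_value_exists[OF G(1,5) K] by blast
  define G' where "G' = {p + t *\<^sub>R (x0, c) | p t. p \<in> G}"
  have G'E: "\<exists>z y t. x = z + t *\<^sub>R x0 \<and> y1 = y + t * c \<and> (z, y) \<in> G" if "(x, y1) \<in> G'" for x y1
    using that unfolding G'_def by force
  have "G' = {p + q | p q. p \<in> G \<and> q \<in> span {(x0, c)}}"
    unfolding G'_def span_singleton by blast
  then have "subspace G'" using subspace_sums[OF G(1) subspace_span] by simp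
  moreover have "y1 = y2" if in_G': "(x, y1) \<in> G'" "(x, y2) \<in> G'" for x y1 y2
  proof -
    obtain z y t z' y' t' where p: "x = z + t *\<^sub>R x0" "y1 = y + t * c" "(z, y) \<in> G"
      and q: "x = z' + t' *\<^sub>R x0" "y2 = y' + t' * c" "(z', y') \<in> G"
      using G'E[OF in_G'(1)] G'E[OF in_G'(2)] by blast
    have "t = t'"
    proof (rule ccontr)
      assume "t \<noteq> t'"
      moreover have "(t - t') *\<^sub>R x0 = z' - z"
        using p(1) q(1) by (simp add: algebra_simps)
      ultimately have "x0 = inverse (t - t') *\<^sub>R (z' - z)"
        by (metis eq_iff_diff_eq_0 scaleR_left_imp_eq scaleR_scaleR right_inverse scaleR_one)
      moreover have "z' - z \<in> fst ` G" using p(3) q(3) linear_subspace_image[OF linear_fst G(1)]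
        by (force intro: subspace_diff)
      ultimately show False
        using x0(2) subspace_scale[OF linear_subspace_image[OF linear_fst G(1)]] by metis
    qed
    then show ?thesis using G(2) p q by auto
  qed
  moreover have "fst ` G' \<subseteq> S"
    using G(3) x0(1) S unfolding G'_def by (force intro: subspace_add subspace_scale)
  moreover have "(x, f x) \<in> G'" if "x \<in> M" for x
    using G(4)[OF that] unfolding G'_def by force
  moreover have "\<forall>(x, y)\<in>G'. y \<le> K * norm x"
    using dominated_extension_bound[OF G(1,5) K c] unfolding G'_def by auto
  ultimately have "G' \<in> dominated_linear_graphs S M f K"
    unfolding dominated_linear_graphs_def by blast
  moreover have "G \<subseteq> G'" unfolding G'_def by force
  moreover have "(x0, c) \<in> G' - G"
    using x0(2) subspace_0[OF G(1)] unfolding G'_def by (force simp: zero_prod_def)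
  ultimately show ?thesis by blast
qed

lemma subspace_Union_chain:
  assumes "C \<noteq> {}" and "\<And>X. X \<in> C \<Longrightarrow> subspace X"
    and "\<And>X Y. X \<in> C \<Longrightarrow> Y \<in> C \<Longrightarrow> X \<subseteq> Y \<or> Y \<subseteq> X"
  shows "subspace (\<Union>C)"
  unfolding subspace_def
proof (intro conjI ballI allI)
  show "0 \<in> \<Union>C" using assms(1,2) subspace_0 by blast
next
  fix x y assume "x \<in> \<Union>C" "y \<in> \<Union>C"
  then obtain X Y where "X \<in> C" "Y \<in> C" "x \<in> X" "y \<in> Y" by blast
  then show "x + y \<in> \<Union>C" using assms(2)[of X] assms(2)[of Y] assms(3)[of X Y] subspace_add by blast
next
  fix c x assume "x \<in> \<Union>C"
  then show "c *\<^sub>R x \<in> \<Union>C" using assms(2) subspace_scale by blast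
qed

lemma dominated_linear_graphs_Union_chain:
  assumes C: "C \<noteq> {}" "subset.chain (dominated_linear_graphs S M f K) C"
  shows "\<Union>C \<in> dominated_linear_graphs S M f K"
proof -
  have in_graphs: "X \<in> dominated_linear_graphs S M f K" if "X \<in> C" for X
    using C(2) that unfolding subset.chain_def by blast
  have comparable: "X \<subseteq> Y \<or> Y \<subseteq> X" if "X \<in> C" "Y \<in> C" for X Y
    using C(2) that unfolding subset.chain_def by blast
  note graph = dominated_linear_graphsD[OF in_graphs]
  have "subspace (\<Union>C)" by (rule subspace_Union_chain[OF C(1) graph(1) comparable])
  moreover have "y = z" if in_Union: "(x, y) \<in> \<Union>C" "(x, z) \<in> \<Union>C" for x y z
  proof -
    obtain X Y where XY: "X \<in> C" "Y \<in> C" "(x, y) \<in> X" "(x, z) \<in> Y" using in_Union by blast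
    then show ?thesis using comparable[OF XY(1,2)] graph(2)[OF XY(1)] graph(2)[OF XY(2)] by blast
  qed
  moreover have "fst ` \<Union>C \<subseteq> S" using graph(3) by blast
  moreover have "(x, f x) \<in> \<Union>C" if "x \<in> M" for x using C(1) graph(4)[OF _ that] by blast
  moreover have "\<forall>(x, y)\<in>\<Union>C. y \<le> K * norm x" using graph(5) by blast
  ultimately show ?thesis unfolding dominated_linear_graphs_def by blast
qed

lemma subspace_graph:
  assumes M: "subspace M" and f_add: "\<forall>x\<in>M. \<forall>y\<in>M. f (x + y) = f x + f y"
    and f_scale: "\<forall>x\<in>M. \<forall>t. f (t *\<^sub>R x) = t * f x"
  shows "subspace ((\<lambda>x. (x, f x)) ` M)"
  unfolding subspace_def
proof (intro conjI ballI allI)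
  have "f 0 = 0" using f_scale[rule_format, of 0 0] subspace_0[OF M] by simp
  then show "0 \<in> (\<lambda>x. (x, f x)) ` M" using subspace_0[OF M] by (force simp: zero_prod_def)
next
  fix p q assume "p \<in> (\<lambda>x. (x, f x)) ` M" "q \<in> (\<lambda>x. (x, f x)) ` M"
  then show "p + q \<in> (\<lambda>x. (x, f x)) ` M"
    using f_add subspace_add[OF M] by (auto intro!: image_eqI)
next
  fix t p assume "p \<in> (\<lambda>x. (x, f x)) ` M"
  then show "t *\<^sub>R p \<in> (\<lambda>x. (x, f x)) ` M"
    using f_scale subspace_scale[OF M] by (auto intro!: image_eqI)
qed

lemma total_dominated_linear_graph_exists:
  fixes S M :: "'v::real_normed_vector set" and f :: "'v \<Rightarrow> real"
  assumes S: "subspace S" and M: "subspace M" "M \<subseteq> S" and K: "K \<ge> 0"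
    and f_add: "\<forall>x\<in>M. \<forall>y\<in>M. f (x + y) = f x + f y"
    and f_scale: "\<forall>x\<in>M. \<forall>t. f (t *\<^sub>R x) = t * f x"
    and f_bound: "\<forall>x\<in>M. f x \<le> K * norm x"
  shows "\<exists>G\<in>dominated_linear_graphs S M f K. fst ` G = S"
proof -
  have "(\<lambda>x. (x, f x)) ` M \<in> dominated_linear_graphs S M f K"
    using subspace_graph[OF M(1) f_add f_scale] M(2) f_bound unfolding dominated_linear_graphs_def by auto
  then have "\<exists>G\<in>dominated_linear_graphs S M f K.
      \<forall>X\<in>dominated_linear_graphs S M f K. G \<subseteq> X \<longrightarrow> X = G"
    by (intro subset_Zorn_nonempty dominated_linear_graphs_Union_chain) auto
  then obtain G where G: "G \<in> dominated_linear_graphs S M f K"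
    and maximal: "\<And>X. X \<in> dominated_linear_graphs S M f K \<Longrightarrow> G \<subseteq> X \<Longrightarrow> X = G"
    by blast
  have "x \<in> fst ` G" if x: "x \<in> S" for x
  proof (rule ccontr)
    assume "x \<notin> fst ` G"
    then obtain G' where "G' \<in> dominated_linear_graphs S M f K" "G \<subset> G'"
      using dominated_linear_graph_extend[OF G S x _ K] by blast
    then show False using maximal by blast
  qed
  then show ?thesis using G dominated_linear_graphsD(3)[OF G] by blast
qed

theorem hahn_banach_real:
  fixes S M :: "'v::real_normed_vector set" and f :: "'v \<Rightarrow> real"
  assumes S: "subspace S" and M: "subspace M" "M \<subseteq> S" and K: "K \<ge> 0"
    and f_add: "\<forall>x\<in>M. \<forall>y\<in>M. f (x + y) = f x + f y"
    and f_scale: "\<forall>x\<in>M. \<forall>t. f (t *\<^sub>R x) = t * f x"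
    and f_bound: "\<forall>x\<in>M. f x \<le> K * norm x"
  shows "\<exists>g. (\<forall>x\<in>S. \<forall>y\<in>S. g (x + y) = g x + g y) \<and> (\<forall>x\<in>S. \<forall>t. g (t *\<^sub>R x) = t * g x)
            \<and> (\<forall>x\<in>M. g x = f x) \<and> (\<forall>x\<in>S. g x \<le> K * norm x)"
proof -
  obtain G where G_graph: "G \<in> dominated_linear_graphs S M f K" and full: "fst ` G = S"
    using total_dominated_linear_graph_exists[OF assms] by blast
  note G = dominated_linear_graphsD[OF G_graph]
  define g where "g x = (THE y. (x, y) \<in> G)" for x
  have graph_g: "(x, g x) \<in> G" if x: "x \<in> S" for x
  proof -
    obtain y where y: "(x, y) \<in> G" using x full by force
    have "g x = y" unfolding g_def by (rule the_equality) (use y G(2) in blast)+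
    then show ?thesis using y by simp
  qed
  have "g (x + y) = g x + g y" if "x \<in> S" "y \<in> S" for x y
    using G(2)[OF graph_g[OF subspace_add[OF S that]]] subspace_add[OF G(1) graph_g graph_g] that
    by simp
  moreover have "g (t *\<^sub>R x) = t * g x" if "x \<in> S" for x t
    using G(2)[OF graph_g[OF subspace_scale[OF S that]]] subspace_scale[OF G(1) graph_g[OF that]]
    by simp
  moreover have "g x = f x" if "x \<in> M" for x
    using G(2)[OF graph_g G(4)[OF that]] M(2) that by blast
  moreover have "g x \<le> K * norm x" if "x \<in> S" for x
    using G(5) graph_g[OF that] by blast
  ultimately show ?thesis by blast
qed

text \<open>A real subspace of a real normed type with a complex scalar multiplication on it; this
  covers both \<open>A\<close> (with \<open>scaleC\<close>) and the dual \<open>cdual\<close>, which lives inside the real-linear maps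
  \<open>A \<Rightarrow>\<^sub>L complex\<close> (with \<open>dual_smul\<close>).\<close>
locale complex_normed_subspace =
  fixes S :: "'v::real_normed_vector set" and sm :: "complex \<Rightarrow> 'v \<Rightarrow> 'v"
  assumes subspace_S: "subspace S"
    and sm_closed: "x \<in> S \<Longrightarrow> sm c x \<in> S"
    and sm_add_right: "x \<in> S \<Longrightarrow> y \<in> S \<Longrightarrow> sm c (x + y) = sm c x + sm c y"
    and sm_add_left: "x \<in> S \<Longrightarrow> sm (c + d) x = sm c x + sm d x"
    and sm_sm: "x \<in> S \<Longrightarrow> sm c (sm d x) = sm (c * d) x"
    and sm_of_real: "x \<in> S \<Longrightarrow> sm (of_real r) x = r *\<^sub>R x"
    and norm_sm: "x \<in> S \<Longrightarrow> norm (sm c x) = cmod c * norm x"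
begin

lemma sm_one: "x \<in> S \<Longrightarrow> sm 1 x = x"
  using sm_of_real[of x 1] by simp

lemma sm_zero_left: "x \<in> S \<Longrightarrow> sm 0 x = 0"
  using sm_of_real[of x 0] by simp

lemma sm_minus_one: "x \<in> S \<Longrightarrow> sm (- 1) x = - x"
  using sm_of_real[of x "- 1"] by simp

lemma sm_diff_left: "x \<in> S \<Longrightarrow> sm (c - d) x = sm c x - sm d x"
  using sm_add_left[of x c "- d"] sm_sm[of x "- 1" d] sm_minus_one[OF sm_closed[of x d]] by simp

lemma sm_zero_right: "sm c 0 = 0"
  using sm_add_right[OF subspace_0[OF subspace_S] subspace_0[OF subspace_S], of c] by simp

lemma sm_diff_right: "x \<in> S \<Longrightarrow> y \<in> S \<Longrightarrow> sm c (x - y) = sm c x - sm c y"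
  using sm_add_right[OF subspace_diff[OF subspace_S] _, of x y y c] by simp

lemma sm_scaleR_right: "x \<in> S \<Longrightarrow> sm c (r *\<^sub>R x) = r *\<^sub>R sm c x"
  by (metis mult.commute sm_closed sm_of_real sm_sm)

lemma sm_continuous:
  assumes a0: "a0 \<in> S" and r: "r > 0"
  shows "\<exists>\<delta>>0. \<forall>c a. a \<in> S \<longrightarrow> dist c c0 < \<delta> \<longrightarrow> dist a a0 < \<delta> \<longrightarrow> dist (sm c a) (sm c0 a0) < r"
proof -
  define K where "K = cmod c0 + 1 + norm a0"
  have K: "K > 0" unfolding K_def using norm_ge_zero[of c0] norm_ge_zero[of a0] by linarith
  define \<delta> where "\<delta> = min 1 (r / (2 * K))"
  have \<delta>: "\<delta> > 0" "\<delta> * K \<le> r / 2" unfolding \<delta>_def using r K by (auto simp: min_def field_simps)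
  have "dist (sm c a) (sm c0 a0) < r" if a: "a \<in> S" and c: "dist c c0 < \<delta>" and aa: "dist a a0 < \<delta>" for c a
  proof -
    have "sm c a - sm c0 a0 = sm c (a - a0) + sm (c - c0) a0"
      using sm_diff_right[OF a a0] sm_diff_left[OF a0] by simp
    then have "dist (sm c a) (sm c0 a0) \<le> cmod c * norm (a - a0) + cmod (c - c0) * norm a0"
      using norm_triangle_ineq[of "sm c (a - a0)" "sm (c - c0) a0"]
        norm_sm[OF subspace_diff[OF subspace_S a a0]] norm_sm[OF a0] by (simp add: dist_norm)
    also have "\<dots> \<le> (cmod c0 + 1) * \<delta> + \<delta> * norm a0"
    proof (rule add_mono)
      have "cmod c \<le> cmod c0 + 1"
        using c norm_triangle_ineq2[of c c0] \<delta>_def by (simp add: dist_norm)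
      then show "cmod c * norm (a - a0) \<le> (cmod c0 + 1) * \<delta>"
        using aa by (intro mult_mono) (auto simp: dist_norm)
      show "cmod (c - c0) * norm a0 \<le> \<delta> * norm a0"
        using c by (intro mult_right_mono) (auto simp: dist_norm)
    qed
    also have "\<dots> = \<delta> * K" unfolding K_def by (simp add: algebra_simps)
    finally show ?thesis using \<delta> r by linarith
  qed
  then show ?thesis using \<delta>(1) by blast
qed

text \<open>Rotating \<open>x\<close> by a unit scalar makes \<open>G x\<close> real and nonnegative.\<close>
lemma cmod_le_of_Re_le:
  assumes G_sm: "\<And>x c. x \<in> S \<Longrightarrow> G (sm c x) = c * G x"
    and Re_bound: "\<And>x. x \<in> S \<Longrightarrow> Re (G x) \<le> K * norm x" and x: "x \<in> S"
  shows "cmod (G x) \<le> K * norm x"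
proof (cases "G x = 0")
  case True
  then show ?thesis using Re_bound[OF x] by simp
next
  case False
  define u where "u = cnj (G x) / of_real (cmod (G x))"
  have "cmod u = 1" using False unfolding u_def by (simp add: norm_divide)
  have "u * G x = of_real (cmod (G x))" using False unfolding u_def
    by (simp add: complex_norm_square[symmetric] power2_eq_square field_simps)
  then have "cmod (G x) = Re (G (sm u x))" using G_sm[OF x, of u] by simp
  also have "\<dots> \<le> K * norm (sm u x)" using Re_bound sm_closed[OF x] by blast
  also have "\<dots> = K * norm x" using norm_sm[OF x] \<open>cmod u = 1\<close> by simp
  finally show ?thesis .
qed

text \<open>A complex-linear functional is determined by its real part \<open>g\<close> through
  \<open>Im (G x) = - g (\<i> x)\<close>.\<close>
lemma complexify_functional:
  assumes g_add: "\<forall>x\<in>S. \<forall>y\<in>S. g (x + y) = g x + g y"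
    and g_scale: "\<forall>x\<in>S. \<forall>t. g (t *\<^sub>R x) = t * g x"
    and g_bound: "\<forall>x\<in>S. g x \<le> K * norm x"
  defines "G \<equiv> \<lambda>x. Complex (g x) (- g (sm \<i> x))"
  shows "\<forall>x\<in>S. \<forall>y\<in>S. G (x + y) = G x + G y" and "\<forall>x\<in>S. \<forall>c. G (sm c x) = c * G x"
    and "\<forall>x. Re (G x) = g x" and "\<forall>x\<in>S. cmod (G x) \<le> K * norm x"
proof -
  have g_minus: "g (- x) = - g x" if "x \<in> S" for x
    using g_scale that by (metis scaleR_minus1_left mult_minus1)
  have G_add: "G (x + y) = G x + G y" if "x \<in> S" "y \<in> S" for x y
    using that g_add sm_add_right sm_closed unfolding G_def by (simp add: complex_eq_iff)
  have G_real: "G (r *\<^sub>R x) = of_real r * G x" if "x \<in> S" for x r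
    using that g_scale sm_scaleR_right sm_closed unfolding G_def by (simp add: complex_eq_iff)
  have G_i: "G (sm \<i> x) = \<i> * G x" if x: "x \<in> S" for x
  proof -
    have "sm \<i> (sm \<i> x) = (- 1) *\<^sub>R x" using sm_sm[OF x] sm_of_real[OF x, of "- 1"] by simp
    then show ?thesis using g_minus[OF x] unfolding G_def by (simp add: complex_eq_iff)
  qed
  have G_sm: "G (sm c x) = c * G x" if x: "x \<in> S" for x c
  proof -
    have "sm (\<i> * of_real (Im c)) x = sm \<i> (Im c *\<^sub>R x)"
      using sm_sm[OF x, of \<i> "of_real (Im c)"] sm_of_real[OF x] by simp
    then have "sm c x = Re c *\<^sub>R x + sm \<i> (Im c *\<^sub>R x)"
      using sm_add_left[OF x, of "of_real (Re c)" "\<i> * of_real (Im c)"]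
      by (simp add: sm_of_real[OF x] complex_eq[of c, symmetric] mult.commute)
    then have "G (sm c x) = of_real (Re c) * G x + \<i> * (of_real (Im c) * G x)"
      using x G_add G_real G_i sm_closed subspace_scale[OF subspace_S] by simp
    also have "\<dots> = c * G x" by (simp add: complex_eq_iff algebra_simps)
    finally show ?thesis .
  qed
  have "Re (G x) \<le> K * norm x" if "x \<in> S" for x using g_bound that unfolding G_def by simp
  then have G_bound: "cmod (G x) \<le> K * norm x" if "x \<in> S" for x
    using cmod_le_of_Re_le[OF G_sm] that by blast
  show "\<forall>x\<in>S. \<forall>y\<in>S. G (x + y) = G x + G y" "\<forall>x\<in>S. \<forall>c. G (sm c x) = c * G x"
    "\<forall>x. Re (G x) = g x" "\<forall>x\<in>S. cmod (G x) \<le> K * norm x"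
    using G_add G_sm G_bound unfolding G_def by auto
qed

theorem hahn_banach_complex:
  assumes M: "subspace M" "M \<subseteq> S" "\<And>c x. x \<in> M \<Longrightarrow> sm c x \<in> M" and K: "K \<ge> 0"
    and F_add: "\<And>x y. x \<in> M \<Longrightarrow> y \<in> M \<Longrightarrow> F (x + y) = F x + F y"
    and F_sm: "\<And>x c. x \<in> M \<Longrightarrow> F (sm c x) = c * F x"
    and F_bound: "\<And>x. x \<in> M \<Longrightarrow> cmod (F x) \<le> K * norm x"
  shows "\<exists>G. (\<forall>x\<in>S. \<forall>y\<in>S. G (x + y) = G x + G y) \<and> (\<forall>x\<in>S. \<forall>c. G (sm c x) = c * G x)
            \<and> (\<forall>x\<in>M. G x = F x) \<and> (\<forall>x\<in>S. cmod (G x) \<le> K * norm x)"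
proof -
  have "\<forall>x\<in>M. \<forall>t. Re (F (t *\<^sub>R x)) = t * Re (F x)"
  proof (intro ballI allI)
    fix x t assume "x \<in> M"
    then have "t *\<^sub>R x = sm (of_real t) x" using sm_of_real M(2) by auto
    then show "Re (F (t *\<^sub>R x)) = t * Re (F x)" using F_sm[OF \<open>x \<in> M\<close>] by simp
  qed
  moreover have "\<forall>x\<in>M. Re (F x) \<le> K * norm x"
    using F_bound complex_Re_le_cmod order_trans by blast
  ultimately obtain g where g_add: "\<forall>x\<in>S. \<forall>y\<in>S. g (x + y) = g x + g y"
    and g_scale: "\<forall>x\<in>S. \<forall>t. g (t *\<^sub>R x) = t * g x"
    and g_M: "\<forall>x\<in>M. g x = Re (F x)" and g_bound: "\<forall>x\<in>S. g x \<le> K * norm x"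
    using hahn_banach_real[OF subspace_S M(1,2) K, of "\<lambda>x. Re (F x)"] F_add by auto
  define G where "G x = Complex (g x) (- g (sm \<i> x))" for x
  note G = complexify_functional[OF g_add g_scale g_bound, folded G_def]
  have "G x = F x" if x: "x \<in> M" for x
  proof -
    have "g (sm \<i> x) = - Im (F x)" using g_M M(3)[OF x] F_sm[OF x] by simp
    then show ?thesis using g_M x unfolding G_def by (simp add: complex_eq_iff)
  qed
  then show ?thesis using G(1,2,4) by blast
qed

lemma norm_add_sm_ge_infdist:
  assumes V: "V \<subseteq> S" "\<And>c v. v \<in> V \<Longrightarrow> sm c v \<in> V" and v: "v \<in> V" and a: "a \<in> S"
  shows "cmod c * infdist a V \<le> norm (v + sm c a)"
proof (cases "c = 0")
  case True
  then show ?thesis by simp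
next
  case False
  define w where "w = sm (- 1 / c) v"
  have w: "w \<in> V" "w \<in> S" unfolding w_def using V v by auto
  have "sm c w = - v" unfolding w_def using sm_sm V v False by (simp add: subsetD sm_minus_one)
  then have "v + sm c a = sm c (a - w)" using sm_diff_right[OF a w(2)] by simp
  then have "norm (v + sm c a) = cmod c * dist a w"
    using norm_sm a w(2) subspace_diff[OF subspace_S] by (simp add: dist_norm)
  moreover have "infdist a V \<le> dist a w" using w(1) by (rule infdist_le)
  ultimately show ?thesis by (simp add: mult_left_mono)
qed

lemma subspace_add_line:
  assumes V: "subspace V" "V \<subseteq> S" "\<And>c v. v \<in> V \<Longrightarrow> sm c v \<in> V" and a: "a \<in> S"
  defines "M \<equiv> {v + sm c a | v c. v \<in> V}"
  shows "subspace M" and "M \<subseteq> S" and "\<And>e x. x \<in> M \<Longrightarrow> sm e x \<in> M"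
proof -
  show "subspace M" unfolding subspace_def M_def
  proof (intro conjI ballI allI)
    show "0 \<in> {v + sm c a | v c. v \<in> V}" using subspace_0[OF V(1)] sm_zero_left[OF a] by force
  next
    fix x y assume "x \<in> {v + sm c a | v c. v \<in> V}" "y \<in> {v + sm c a | v c. v \<in> V}"
    then obtain v c v' c' where "x = v + sm c a" "y = v' + sm c' a" "v \<in> V" "v' \<in> V" by blast
    moreover have "v + sm c a + (v' + sm c' a) = (v + v') + sm (c + c') a"
      using sm_add_left[OF a] by (simp add: algebra_simps)
    ultimately show "x + y \<in> {v + sm c a | v c. v \<in> V}" using subspace_add[OF V(1)] by blast
  next
    fix t x assume "x \<in> {v + sm c a | v c. v \<in> V}"
    then obtain v c where "x = v + sm c a" "v \<in> V" by blast
    moreover have "t *\<^sub>R (v + sm c a) = t *\<^sub>R v + sm (of_real t * c) a"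
      using sm_of_real[OF sm_closed[OF a]] sm_sm[OF a] by (simp add: scaleR_add_right)
    ultimately show "t *\<^sub>R x \<in> {v + sm c a | v c. v \<in> V}" using subspace_scale[OF V(1)] by blast
  qed
  show "M \<subseteq> S" unfolding M_def using V(2) sm_closed[OF a] subspace_add[OF subspace_S] by blast
  fix e x assume "x \<in> M"
  then obtain v c where "x = v + sm c a" "v \<in> V" unfolding M_def by blast
  moreover have "sm e (v + sm c a) = sm e v + sm (e * c) a"
    using sm_add_right[OF _ sm_closed[OF a]] sm_sm[OF a] V(2) \<open>v \<in> V\<close> by auto
  ultimately show "sm e x \<in> M" unfolding M_def using V(3) by auto
qed

lemma line_functional_exists:
  assumes V: "subspace V" "V \<subseteq> S" "\<And>c v. v \<in> V \<Longrightarrow> sm c v \<in> V" and a: "a \<in> S"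
    and d_pos: "infdist a V > 0"
  defines "M \<equiv> {v + sm c a | v c. v \<in> V}"
  shows "\<exists>F. (\<forall>x\<in>M. \<forall>y\<in>M. F (x + y) = F x + F y) \<and> (\<forall>x\<in>M. \<forall>e. F (sm e x) = e * F x)
    \<and> (\<forall>x\<in>M. cmod (F x) \<le> 1 * norm x) \<and> (\<forall>v\<in>V. \<forall>c. F (v + sm c a) = c * of_real (infdist a V))"
proof -
  define d where "d = infdist a V"
  have d: "d > 0" using d_pos unfolding d_def .
  have unique: "c = c'" if "v \<in> V" "v' \<in> V" "v + sm c a = v' + sm c' a" for v v' c c'
  proof -
    have "(v - v') + sm (c - c') a = (v + sm c a) - (v' + sm c' a)"
      using sm_diff_left[OF a] by (simp add: algebra_simps)
    then have "(v - v') + sm (c - c') a = 0" using that(3) by simp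
    then have "cmod (c - c') * d \<le> 0"
      using norm_add_sm_ge_infdist[OF V(2,3) subspace_diff[OF V(1) that(1,2)] a, of "c - c'"] d_def
      by simp
    then show ?thesis using d by (simp add: mult_le_0_iff)
  qed
  define F where "F x = (THE c. \<exists>v\<in>V. x = v + sm c a) * of_real d" for x
  have F_eq: "F (v + sm c a) = c * of_real d" if "v \<in> V" for v c
  proof -
    have "(THE c'. \<exists>v'\<in>V. v + sm c a = v' + sm c' a) = c"
      by (rule the_equality) (use that unique in blast)+
    then show ?thesis unfolding F_def by simp
  qed
  have F_add: "F (x + y) = F x + F y" if xy_M: "x \<in> M" "y \<in> M" for x y
  proof -
    obtain v c v' c' where xy: "x = v + sm c a" "y = v' + sm c' a" "v \<in> V" "v' \<in> V"
      using xy_M unfolding M_def by blast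
    then have "x + y = (v + v') + sm (c + c') a" using sm_add_left[OF a] by (simp add: algebra_simps)
    then have "F (x + y) = (c + c') * of_real d" using F_eq subspace_add[OF V(1) xy(3,4)] by simp
    then show ?thesis using xy F_eq by (simp add: distrib_right)
  qed
  have F_sm: "F (sm e x) = e * F x" if x_M: "x \<in> M" for x e
  proof -
    obtain v c where x: "x = v + sm c a" "v \<in> V" using x_M unfolding M_def by blast
    then have "sm e x = sm e v + sm (e * c) a"
      using sm_add_right[OF _ sm_closed[OF a]] sm_sm[OF a] V(2) by auto
    then show ?thesis using x F_eq V(3) by simp
  qed
  have F_bound: "cmod (F x) \<le> 1 * norm x" if x_M: "x \<in> M" for x
  proof -
    obtain v c where "x = v + sm c a" "v \<in> V" using x_M unfolding M_def by blast
    then show ?thesis using F_eq norm_add_sm_ge_infdist[OF V(2,3) _ a] d d_def by (simp add: norm_mult)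
  qed
  show ?thesis using F_add F_sm F_bound F_eq unfolding d_def by blast
qed

theorem hahn_banach_distance:
  assumes V: "subspace V" "V \<subseteq> S" "\<And>c v. v \<in> V \<Longrightarrow> sm c v \<in> V" and a: "a \<in> S"
  shows "\<exists>G. (\<forall>x\<in>S. \<forall>y\<in>S. G (x + y) = G x + G y) \<and> (\<forall>x\<in>S. \<forall>c. G (sm c x) = c * G x)
            \<and> (\<forall>v\<in>V. G v = 0) \<and> G a = of_real (infdist a V) \<and> (\<forall>x\<in>S. cmod (G x) \<le> norm x)"
proof (cases "infdist a V = 0")
  case True
  then show ?thesis by (intro exI[of _ "\<lambda>_. 0"]) (simp add: sm_zero_right)
next
  case False
  then have d: "infdist a V > 0" using infdist_nonneg[of a V] by linarith
  define M where "M = {v + sm c a | v c. v \<in> V}"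
  obtain F where F: "\<forall>x\<in>M. \<forall>y\<in>M. F (x + y) = F x + F y" "\<forall>x\<in>M. \<forall>e. F (sm e x) = e * F x"
    "\<forall>x\<in>M. cmod (F x) \<le> 1 * norm x" "\<forall>v\<in>V. \<forall>c. F (v + sm c a) = c * of_real (infdist a V)"
    using line_functional_exists[OF V a d, folded M_def] by blast
  have M: "subspace M" "M \<subseteq> S" "\<And>e x. x \<in> M \<Longrightarrow> sm e x \<in> M"
    using subspace_add_line[OF V a, folded M_def] by blast+
  have "\<exists>G. (\<forall>x\<in>S. \<forall>y\<in>S. G (x + y) = G x + G y) \<and> (\<forall>x\<in>S. \<forall>c. G (sm c x) = c * G x)
      \<and> (\<forall>x\<in>M. G x = F x) \<and> (\<forall>x\<in>S. cmod (G x) \<le> 1 * norm x)"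
    by (rule hahn_banach_complex[OF M zero_le_one]) (use F in auto)
  then obtain G where G: "\<forall>x\<in>S. \<forall>y\<in>S. G (x + y) = G x + G y" "\<forall>x\<in>S. \<forall>c. G (sm c x) = c * G x"
    "\<forall>x\<in>M. G x = F x" "\<forall>x\<in>S. cmod (G x) \<le> 1 * norm x"
    by blast
  have "0 + sm 1 a \<in> M" unfolding M_def using subspace_0[OF V(1)] by blast
  then have "G (0 + sm 1 a) = of_real (infdist a V)"
    using G(3) F(4)[rule_format, OF subspace_0[OF V(1)], of 1] by simp
  moreover have "G v = 0" if v: "v \<in> V" for v
  proof -
    have "v + sm 0 a \<in> M" unfolding M_def using v by blast
    then have "G (v + sm 0 a) = 0" using G(3) F(4)[rule_format, OF v, of 0] by simp
    then show ?thesis using sm_zero_left[OF a] by simp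
  qed
  ultimately show ?thesis using G(1,2,4) sm_one[OF a] by auto
qed

end

section \<open>The dual space\<close>

lemma scaleC_zero_right [simp]: "c *\<^sub>C (0::'a::complex_normed_vector) = 0"
  using scaleC_add_right[of c "0::'a" 0] by simp

lemma dual_smul_apply [simp]: "blinfun_apply (dual_smul c f) x = c * blinfun_apply f x"
  unfolding dual_smul_def by (simp add: mult.commute)

lemma cdualD: "f \<in> cdual \<Longrightarrow> blinfun_apply f (c *\<^sub>C x) = c * blinfun_apply f x"
  unfolding cdual_def by blast

lemma complex_normed_subspace_UNIV:
  "complex_normed_subspace (UNIV :: 'a::complex_normed_vector set) scaleC"
  by unfold_locales
    (auto simp: scaleC_add_right scaleC_add_left scaleC_scaleC scaleR_scaleC norm_scaleC)

lemma norm_dual_smul_le: "norm (dual_smul c f) \<le> cmod c * norm f"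
  by (rule norm_blinfun_bound) (auto simp: norm_mult mult.assoc intro!: mult_left_mono norm_blinfun)

lemma norm_dual_smul: "norm (dual_smul c f) = cmod c * norm f"
proof (cases "c = 0")
  case False
  have "dual_smul (1 / c) (dual_smul c f) = f" using False by (intro blinfun_eqI) simp
  then have "norm f \<le> cmod (1 / c) * norm (dual_smul c f)" by (metis norm_dual_smul_le)
  then have "cmod c * norm f \<le> norm (dual_smul c f)"
    using False by (simp add: norm_divide field_simps)
  then show ?thesis using norm_dual_smul_le[of c f] by linarith
qed (simp add: dual_smul_def blinfun_eqI[of _ 0])

lemma complex_normed_subspace_cdual:
  "complex_normed_subspace (cdual :: ('a::complex_normed_vector \<Rightarrow>\<^sub>L complex) set) dual_smul"
proof unfold_locales
  show "subspace (cdual :: ('a \<Rightarrow>\<^sub>L complex) set)"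
    unfolding subspace_def cdual_def
    by (auto simp: blinfun.bilinear_simps distrib_left scaleR_conv_of_real)
qed (auto simp: cdual_def norm_dual_smul scaleR_conv_of_real blinfun.bilinear_simps
      intro!: blinfun_eqI simp flip: distrib_left distrib_right)

lemma Blinfun_in_cdual:
  fixes G :: "'a::complex_normed_vector \<Rightarrow> complex"
  assumes add: "\<And>x y. G (x + y) = G x + G y" and hom: "\<And>x c. G (c *\<^sub>C x) = c * G x"
    and bound: "\<And>x. cmod (G x) \<le> K * norm x" and K: "K \<ge> 0"
  shows "Blinfun G \<in> cdual" and "blinfun_apply (Blinfun G) = G" and "norm (Blinfun G) \<le> K"
proof -
  have "bounded_linear G"
  proof (rule bounded_linear_intro[where K = K])
    show "G (r *\<^sub>R x) = r *\<^sub>R G x" for r x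
      by (metis hom scaleR_scaleC scaleR_conv_of_real)
    show "norm (G x) \<le> norm x * K" for x using bound[of x] by (simp add: mult.commute)
  qed (rule add)
  then show apply_G: "blinfun_apply (Blinfun G) = G" by (rule bounded_linear_Blinfun_apply)
  show "Blinfun G \<in> cdual" unfolding cdual_def using apply_G hom by simp
  show "norm (Blinfun G) \<le> K" by (rule norm_blinfun_bound) (use K bound apply_G in auto)
qed

lemma csubspace_in_UNIV_imp_subspace:
  "csubspace_in UNIV scaleC (V :: 'a::complex_normed_vector set) \<Longrightarrow> subspace V"
  unfolding csubspace_in_def subspace_def by (metis scaleR_scaleC)

lemma annih_subset_cdual: "annih V \<subseteq> cdual"
  unfolding annih_def by blast

lemma closed_cdual: "closed (cdual :: ('a::complex_normed_vector \<Rightarrow>\<^sub>L complex) set)"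
  unfolding cdual_def
  by (intro closed_Collect_all closed_Collect_eq continuous_on_mult_left
      linear_continuous_on blinfun.bounded_linear_left)

lemma closed_annih: "closed (annih (V :: 'a::complex_normed_vector set))"
proof -
  have "annih V = cdual \<inter> (\<Inter>v\<in>V. {f. blinfun_apply f v = 0})" unfolding annih_def by blast
  moreover have "closed (\<Inter>v\<in>V. {f::'a \<Rightarrow>\<^sub>L complex. blinfun_apply f v = 0})"
    by (intro closed_INT ballI closed_Collect_eq continuous_on_const
        linear_continuous_on blinfun.bounded_linear_left)
  ultimately show ?thesis using closed_cdual by auto
qed

lemma csubspace_annih: "csubspace_in cdual dual_smul (annih (V :: 'a::complex_normed_vector set))"
  unfolding csubspace_in_def annih_def cdual_def
  by (auto simp: blinfun.bilinear_simps distrib_left)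

lemma norm_apply_le_infdist:
  fixes V :: "'a::complex_normed_vector set"
  assumes \<psi>: "\<psi> \<in> annih V" and V: "V \<noteq> {}"
  shows "cmod (blinfun_apply \<psi> a) \<le> norm \<psi> * infdist a V"
proof (cases "norm \<psi> = 0")
  case False
  have "cmod (blinfun_apply \<psi> a) / norm \<psi> \<le> dist a v" if v: "v \<in> V" for v
  proof -
    have "blinfun_apply \<psi> a = blinfun_apply \<psi> (a - v)"
      using \<psi> v unfolding annih_def by (simp add: blinfun.diff_right)
    also have "cmod \<dots> \<le> norm \<psi> * norm (a - v)" by (rule norm_blinfun)
    finally show ?thesis using False by (simp add: dist_norm field_simps)
  qed
  then have "cmod (blinfun_apply \<psi> a) / norm \<psi> \<le> infdist a V"
    unfolding infdist_notempty[OF V] using V by (intro cINF_greatest) auto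
  then show ?thesis using False by (simp add: field_simps)
qed simp

lemma annih_norming_functional:
  fixes V :: "'a::complex_normed_vector set"
  assumes V: "csubspace_in UNIV scaleC V"
  shows "\<exists>\<phi>\<in>annih V. norm \<phi> \<le> 1 \<and> blinfun_apply \<phi> a = of_real (infdist a V)"
proof -
  obtain G where G: "\<forall>x y. G (x + y) = G x + G y" "\<forall>x c. G (c *\<^sub>C x) = c * G x"
    "\<forall>v\<in>V. G v = 0" "G a = of_real (infdist a V)" "\<forall>x. cmod (G x) \<le> 1 * norm x"
    using complex_normed_subspace.hahn_banach_distance[OF complex_normed_subspace_UNIV
        csubspace_in_UNIV_imp_subspace[OF V], of a] V
    unfolding csubspace_in_def by auto
  show ?thesis
    using Blinfun_in_cdual[of G 1] G unfolding annih_def by (intro bexI[of _ "Blinfun G"]) auto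
qed

lemma cdual_extension:
  fixes V :: "'a::complex_normed_vector set" and \<phi> :: "'a \<Rightarrow>\<^sub>L complex"
  assumes V: "csubspace_in UNIV scaleC V" and \<phi>: "\<phi> \<in> cdual" and K: "K \<ge> 0"
    and bound: "\<And>v. v \<in> V \<Longrightarrow> cmod (blinfun_apply \<phi> v) \<le> K * norm v"
  shows "\<exists>g\<in>cdual. (\<forall>v\<in>V. blinfun_apply g v = blinfun_apply \<phi> v) \<and> norm g \<le> K"
proof -
  obtain G where G: "\<forall>x y. G (x + y) = G x + G y" "\<forall>x c. G (c *\<^sub>C x) = c * G x"
     "\<forall>v\<in>V. G v = blinfun_apply \<phi> v" "\<forall>x. cmod (G x) \<le> K * norm x"
    using complex_normed_subspace.hahn_banach_complex[OF complex_normed_subspace_UNIV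
        csubspace_in_UNIV_imp_subspace[OF V] _ _ K, of "blinfun_apply \<phi>"] V \<phi> bound
    unfolding csubspace_in_def cdual_def by (auto simp: blinfun.bilinear_simps)
  show ?thesis using Blinfun_in_cdual[of G K] G K by (intro bexI[of _ "Blinfun G"]) auto
qed

lemma bidual_norming_functional:
  fixes \<phi> :: "'a::complex_normed_vector \<Rightarrow>\<^sub>L complex"
  assumes \<phi>: "\<phi> \<in> cdual"
  shows "\<exists>\<Psi>. (\<forall>f\<in>cdual. \<forall>g\<in>cdual. \<Psi> (f + g) = \<Psi> f + \<Psi> g)
          \<and> (\<forall>c. \<forall>f\<in>cdual. \<Psi> (dual_smul c f) = c * \<Psi> f)
          \<and> (\<forall>f\<in>cdual. cmod (\<Psi> f) \<le> norm f) \<and> \<Psi> \<phi> = of_real (norm \<phi>)"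
proof -
  interpret cdual: complex_normed_subspace cdual dual_smul by (rule complex_normed_subspace_cdual)
  have "\<exists>G. (\<forall>f\<in>cdual. \<forall>g\<in>cdual. G (f + g) = G f + G g)
      \<and> (\<forall>f\<in>cdual. \<forall>c. G (dual_smul c f) = c * G f) \<and> (\<forall>v\<in>{0}. G v = 0)
      \<and> G \<phi> = of_real (infdist \<phi> {0}) \<and> (\<forall>f\<in>cdual. cmod (G f) \<le> norm f)"
    by (rule cdual.hahn_banach_distance[OF subspace_single_0 _ _ \<phi>])
      (auto simp: cdual.sm_zero_right subspace_0[OF cdual.subspace_S])
  then show ?thesis by (simp add: dist_norm) blast
qed

lemma reflexive_norm_attained:
  fixes \<phi> :: "'a::complex_normed_vector \<Rightarrow>\<^sub>L complex"
  assumes refl: "reflexive_space TYPE('a)" and \<phi>: "\<phi> \<in> cdual"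
  shows "\<exists>a. norm a \<le> 1 \<and> blinfun_apply \<phi> a = of_real (norm \<phi>)"
proof -
  obtain \<Psi> where \<Psi>: "\<forall>f\<in>cdual. \<forall>g\<in>cdual. \<Psi> (f + g) = \<Psi> f + \<Psi> g"
    "\<forall>c. \<forall>f\<in>cdual. \<Psi> (dual_smul c f) = c * \<Psi> f"
    "\<forall>f\<in>cdual. cmod (\<Psi> f) \<le> norm f" "\<Psi> \<phi> = of_real (norm \<phi>)"
    using bidual_norming_functional[OF \<phi>] by blast
  then obtain a :: 'a where a: "\<And>f. f \<in> cdual \<Longrightarrow> \<Psi> f = blinfun_apply f a"
    using refl unfolding reflexive_space_def by (metis mult_1)
  obtain f where f: "f \<in> annih {0}" "norm f \<le> 1" "blinfun_apply f a = of_real (infdist a {0})"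
    using annih_norming_functional[of "{0}" a] unfolding csubspace_in_def by auto
  have "norm a = cmod (\<Psi> f)" using f(1,3) a annih_subset_cdual by (force simp: dist_norm)
  also have "\<dots> \<le> 1" using \<Psi>(3) f(1,2) annih_subset_cdual by force
  finally show ?thesis using a \<phi> \<Psi>(4) by auto
qed

section \<open>Quotient vector bundles\<close>

lemma infdist_less_iff: "A \<noteq> {} \<Longrightarrow> infdist x A < r \<longleftrightarrow> (\<exists>a\<in>A. dist x a < r)"
  by (simp add: infdist_notempty cINF_less_iff)

lemma infdist_ge: "A \<noteq> {} \<Longrightarrow> (\<And>a. a \<in> A \<Longrightarrow> t \<le> dist x a) \<Longrightarrow> t \<le> infdist x A"
  by (simp add: infdist_notempty cINF_greatest)

lemma Ezero_coset: "Ezero \<kappa> x = coset \<kappa> x 0"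
  unfolding Ezero_def coset_def by simp

lemma fst_coset [simp]: "fst (coset \<kappa> x a) = x"
  unfolding coset_def by simp

locale quotient_fibres = complex_normed_subspace B sm
  for B :: "'b::banach set" and sm :: "complex \<Rightarrow> 'b \<Rightarrow> 'b" +
  fixes X :: "'x topology" and \<kappa> :: "'x \<Rightarrow> 'b set"
  assumes csubspace_fibre: "x \<in> topspace X \<Longrightarrow> csubspace_in B sm (\<kappa> x)"
begin

lemma fibre_subset: "x \<in> topspace X \<Longrightarrow> \<kappa> x \<subseteq> B"
  and fibre_zero: "x \<in> topspace X \<Longrightarrow> 0 \<in> \<kappa> x"
  and fibre_add: "x \<in> topspace X \<Longrightarrow> u \<in> \<kappa> x \<Longrightarrow> v \<in> \<kappa> x \<Longrightarrow> u + v \<in> \<kappa> x"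
  and fibre_sm: "x \<in> topspace X \<Longrightarrow> v \<in> \<kappa> x \<Longrightarrow> sm c v \<in> \<kappa> x"
  using csubspace_fibre unfolding csubspace_in_def by blast+

lemma fibre_nonempty: "x \<in> topspace X \<Longrightarrow> \<kappa> x \<noteq> {}"
  using fibre_zero by blast

lemma subspace_fibre: "x \<in> topspace X \<Longrightarrow> subspace (\<kappa> x)"
  unfolding subspace_def using fibre_zero fibre_add fibre_sm[of x _ "of_real _"] sm_of_real fibre_subset
  by (metis subsetD)

lemma fibre_minus: "x \<in> topspace X \<Longrightarrow> v \<in> \<kappa> x \<Longrightarrow> - v \<in> \<kappa> x"
  using subspace_neg[OF subspace_fibre] .

lemma fibre_diff: "x \<in> topspace X \<Longrightarrow> u \<in> \<kappa> x \<Longrightarrow> v \<in> \<kappa> x \<Longrightarrow> u - v \<in> \<kappa> x"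
  using subspace_diff[OF subspace_fibre] .

lemma coset_eq_iff:
  assumes x: "x \<in> topspace X"
  shows "coset \<kappa> x a = coset \<kappa> x b \<longleftrightarrow> a - b \<in> \<kappa> x"
proof
  assume "coset \<kappa> x a = coset \<kappa> x b"
  then have "a \<in> (\<lambda>v. b + v) ` \<kappa> x" using fibre_zero[OF x] unfolding coset_def by force
  then show "a - b \<in> \<kappa> x" by auto
next
  assume ab: "a - b \<in> \<kappa> x"
  have "(\<lambda>v. a + v) ` \<kappa> x = (\<lambda>v. b + v) ` \<kappa> x"
  proof (intro equalityI image_subsetI)
    fix v assume v: "v \<in> \<kappa> x"
    have "a + v = b + ((a - b) + v)" "b + v = a + (v - (a - b))" by simp_all
    then show "a + v \<in> (\<lambda>v. b + v) ` \<kappa> x" "b + v \<in> (\<lambda>v. a + v) ` \<kappa> x"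
      using fibre_add[OF x ab v] fibre_diff[OF x v ab] by blast+
  qed
  then show "coset \<kappa> x a = coset \<kappa> x b" unfolding coset_def by simp
qed

lemma coset_add_fibre: "x \<in> topspace X \<Longrightarrow> v \<in> \<kappa> x \<Longrightarrow> coset \<kappa> x (a + v) = coset \<kappa> x a"
  by (simp add: coset_eq_iff)

lemma coset_in_Etot: "x \<in> topspace X \<Longrightarrow> a \<in> B \<Longrightarrow> coset \<kappa> x a \<in> Etot X B \<kappa>"
  unfolding Etot_def by blast

lemma EtotE:
  assumes "e \<in> Etot X B \<kappa>"
  obtains a where "fst e \<in> topspace X" "a \<in> B" "e = coset \<kappa> (fst e) a"
  using assms unfolding Etot_def by auto

lemma infdist_add_fibre:
  assumes x: "x \<in> topspace X" and v: "v \<in> \<kappa> x"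
  shows "infdist (a + v) (\<kappa> x) = infdist a (\<kappa> x)"
proof -
  have le: "infdist (a + v) (\<kappa> x) \<le> infdist a (\<kappa> x)" if v: "v \<in> \<kappa> x" for a v
  proof (rule infdist_ge[OF fibre_nonempty[OF x]])
    fix w assume "w \<in> \<kappa> x"
    then have "infdist (a + v) (\<kappa> x) \<le> dist (a + v) (w + v)" using fibre_add[OF x _ v] infdist_le by blast
    then show "infdist (a + v) (\<kappa> x) \<le> dist a w" by (simp add: dist_norm)
  qed
  from le[OF v, of a] le[OF fibre_minus[OF x v], of "a + v"] show ?thesis by simp
qed

lemma Enorm_coset:
  assumes x: "x \<in> topspace X"
  shows "Enorm (coset \<kappa> x a) = infdist a (\<kappa> x)"
proof -
  have "Enorm (coset \<kappa> x a) = (INF v\<in>\<kappa> x. dist a (- v))"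
    unfolding Enorm_def coset_def using fibre_nonempty[OF x]
    by (simp add: infdist_notempty image_image dist_norm norm_minus_commute add.commute)
  also have "\<dots> = (INF w\<in>uminus ` \<kappa> x. dist a w)" by (simp add: image_image)
  also have "uminus ` \<kappa> x = \<kappa> x" using fibre_minus[OF x] by force
  finally show ?thesis using fibre_nonempty[OF x] by (simp add: infdist_notempty)
qed

lemma Eadd_coset:
  assumes x: "x \<in> topspace X"
  shows "Eadd (coset \<kappa> x a) (coset \<kappa> x b) = coset \<kappa> x (a + b)"
proof -
  have "{c + d | c d. c \<in> (\<lambda>v. a + v) ` \<kappa> x \<and> d \<in> (\<lambda>v. b + v) ` \<kappa> x} = (\<lambda>v. a + b + v) ` \<kappa> x"
  proof (intro equalityI subsetI)
    fix y assume "y \<in> {c + d | c d. c \<in> (\<lambda>v. a + v) ` \<kappa> x \<and> d \<in> (\<lambda>v. b + v) ` \<kappa> x}"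
    then obtain u v where uv: "u \<in> \<kappa> x" "v \<in> \<kappa> x" "y = (a + u) + (b + v)" by blast
    then have "y = a + b + (u + v)" by (simp add: algebra_simps)
    then show "y \<in> (\<lambda>v. a + b + v) ` \<kappa> x" using fibre_add[OF x uv(1,2)] by blast
  next
    fix y assume "y \<in> (\<lambda>v. a + b + v) ` \<kappa> x"
    then obtain v where v: "v \<in> \<kappa> x" "y = a + b + v" by blast
    then have "y = (a + v) + (b + 0)" by (simp add: algebra_simps)
    then show "y \<in> {c + d | c d. c \<in> (\<lambda>v. a + v) ` \<kappa> x \<and> d \<in> (\<lambda>v. b + v) ` \<kappa> x}"
      using v(1) fibre_zero[OF x] by blast
  qed
  then show ?thesis unfolding Eadd_def coset_def by simp
qed

lemma Esmul_coset:
  assumes x: "x \<in> topspace X" and a: "a \<in> B"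
  shows "Esmul sm \<kappa> c (coset \<kappa> x a) = coset \<kappa> x (sm c a)"
proof -
  have "{sm c a' + v | a' v. a' \<in> (\<lambda>v. a + v) ` \<kappa> x \<and> v \<in> \<kappa> x} = (\<lambda>v. sm c a + v) ` \<kappa> x"
  proof (intro equalityI subsetI)
    fix y assume "y \<in> {sm c a' + v | a' v. a' \<in> (\<lambda>v. a + v) ` \<kappa> x \<and> v \<in> \<kappa> x}"
    then obtain u v where uv: "u \<in> \<kappa> x" "v \<in> \<kappa> x" "y = sm c (a + u) + v" by blast
    have "sm c (a + u) = sm c a + sm c u" using sm_add_right[OF a, of u c] fibre_subset[OF x] uv(1) by blast
    then have "y = sm c a + (sm c u + v)" using uv(3) by (simp add: algebra_simps)
    then show "y \<in> (\<lambda>v. sm c a + v) ` \<kappa> x" using fibre_add[OF x fibre_sm[OF x uv(1)] uv(2)] by blast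
  next
    fix y assume "y \<in> (\<lambda>v. sm c a + v) ` \<kappa> x"
    then obtain v where v: "v \<in> \<kappa> x" "y = sm c a + v" by blast
    then have "y = sm c (a + 0) + v" by simp
    then show "y \<in> {sm c a' + v | a' v. a' \<in> (\<lambda>v. a + v) ` \<kappa> x \<and> v \<in> \<kappa> x}"
      using v(1) fibre_zero[OF x] by blast
  qed
  then show ?thesis unfolding Esmul_def coset_def by simp
qed

lemma Esub_coset:
  assumes "x \<in> topspace X" "a \<in> B" "b \<in> B"
  shows "Esub sm \<kappa> (coset \<kappa> x a) (coset \<kappa> x b) = coset \<kappa> x (a - b)"
  unfolding Esub_def using assms Esmul_coset Eadd_coset sm_minus_one by simp

lemma openin_Etop: "openin (Etop X B \<kappa>) U \<longleftrightarrow> Eopen X B \<kappa> U"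
  unfolding Etop_def topology_inverse'[OF istopology_Eopen] ..

lemma topspace_Etop: "topspace (Etop X B \<kappa>) = Etot X B \<kappa>"
proof -
  have "{p \<in> B \<times> topspace X. coset \<kappa> (snd p) (fst p) \<in> Etot X B \<kappa>} = B \<times> topspace X"
    using coset_in_Etot by auto
  moreover have "openin (prod_topology (subtopology euclidean B) X) (B \<times> topspace X)"
    by (metis openin_topspace topspace_euclidean_subtopology topspace_prod_topology)
  ultimately have "Eopen X B \<kappa> (Etot X B \<kappa>)" unfolding Eopen_def by simp
  then show ?thesis unfolding topspace_def openin_Etop Eopen_def by blast
qed

lemma infdist_fibre_le_norm: "x \<in> topspace X \<Longrightarrow> infdist u (\<kappa> x) \<le> norm u"
  using infdist_le[OF fibre_zero, of x u] by simp

lemma infdist_fibre_add_le: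
  assumes x: "x \<in> topspace X"
  shows "infdist (u + w) (\<kappa> x) \<le> infdist u (\<kappa> x) + infdist w (\<kappa> x)"
proof -
  have "infdist (u + w) (\<kappa> x) - infdist u (\<kappa> x) \<le> dist w v" if v: "v \<in> \<kappa> x" for v
  proof -
    have "infdist (u + w) (\<kappa> x) = infdist (u + (w - v)) (\<kappa> x)"
      using infdist_add_fibre[OF x v, of "u + (w - v)"] by simp
    also have "\<dots> \<le> infdist u (\<kappa> x) + dist w v"
      using infdist_triangle[of "u + (w - v)" "\<kappa> x" u] by (simp add: dist_norm)
    finally show ?thesis by simp
  qed
  then have "infdist (u + w) (\<kappa> x) - infdist u (\<kappa> x) \<le> infdist w (\<kappa> x)"
    by (rule infdist_ge[OF fibre_nonempty[OF x]])
  then show ?thesis by simp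
qed

lemma Enorm_eq_0_imp_Ezero:
  assumes x: "x \<in> topspace X" and closed: "closed (\<kappa> x)"
    and e: "e \<in> Etot X B \<kappa>" "fst e = x" "Enorm e = 0"
  shows "e = Ezero \<kappa> x"
proof -
  obtain a where "e = coset \<kappa> x a" using EtotE[OF e(1)] e(2) by metis
  moreover have "a \<in> \<kappa> x"
    using e(3) calculation Enorm_coset[OF x] in_closed_iff_infdist_zero[OF closed fibre_nonempty[OF x]]
    by simp
  ultimately show ?thesis unfolding Ezero_coset using coset_eq_iff[OF x] by simp
qed

lemma continuous_map_coset:
  assumes a: "a \<in> B"
  shows "continuous_map X (Etop X B \<kappa>) (\<lambda>x. coset \<kappa> x a)"
  unfolding continuous_map_def
proof (intro conjI allI impI Pi_I)
  fix x assume "x \<in> topspace X"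
  then show "coset \<kappa> x a \<in> topspace (Etop X B \<kappa>)" using coset_in_Etot a topspace_Etop by simp
next
  fix U assume "openin (Etop X B \<kappa>) U"
  then have "openin (prod_topology (subtopology euclidean B) X)
      {p \<in> B \<times> topspace X. coset \<kappa> (snd p) (fst p) \<in> U}"
    unfolding openin_Etop Eopen_def by blast
  moreover have "continuous_map X (prod_topology (subtopology euclidean B) X) (\<lambda>x. (a, x))"
    using a by (intro continuous_map_pairedI) auto
  ultimately have "openin X {x \<in> topspace X. (a, x) \<in> {p \<in> B \<times> topspace X. coset \<kappa> (snd p) (fst p) \<in> U}}"
    by (rule openin_continuous_map_preimage[rotated])
  then show "openin X {x \<in> topspace X. coset \<kappa> x a \<in> U}" using a by simp
qed

lemma banach_bundle_infdist_continuous: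
  assumes "banach_bundle X B sm \<kappa>" and a: "a \<in> B"
  shows "continuous_map X euclideanreal (\<lambda>x. infdist a (\<kappa> x))"
proof -
  have "continuous_map X euclideanreal (Enorm \<circ> (\<lambda>x. coset \<kappa> x a))"
    using assms continuous_map_compose[OF continuous_map_coset[OF a]]
    unfolding banach_bundle_def by blast
  then show ?thesis by (rule continuous_map_eq) (simp add: Enorm_coset)
qed

lemma quotient_vector_bundle_if_infdist_usc:
  assumes usc: "\<And>a t. a \<in> B \<Longrightarrow> openin X {y \<in> topspace X. infdist a (\<kappa> y) < t}"
  shows "quotient_vector_bundle X B sm \<kappa>"
  unfolding quotient_vector_bundle_def lower_vietoris_def continuous_on_generated_topo_iff
proof (intro conjI ballI allI impI subsetI)
  fix x assume x: "x \<in> topspace X"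
  then show "csubspace_in B sm (\<kappa> x)" by (rule csubspace_fibre)
next
  fix W assume "W \<in> {{V. csubspace_in B sm V \<and> V \<inter> U \<noteq> {}} |U. openin (subtopology euclidean B) U}"
  then obtain U where U: "openin (subtopology euclidean B) U" "W = {V. csubspace_in B sm V \<and> V \<inter> U \<noteq> {}}"
    by blast
  show "openin X (\<kappa> -` W \<inter> topspace X)"
  proof (subst openin_subopen, intro ballI)
    fix x0 assume "x0 \<in> \<kappa> -` W \<inter> topspace X"
    then obtain v where x0: "x0 \<in> topspace X" and v: "v \<in> \<kappa> x0" "v \<in> U" using U(2) by blast
    obtain r where r: "r > 0" "\<forall>b\<in>B. dist b v < r \<longrightarrow> b \<in> U"
      using U(1) v(2) unfolding openin_euclidean_subtopology_iff by blast
    have "{y \<in> topspace X. infdist v (\<kappa> y) < r} \<subseteq> \<kappa> -` W \<inter> topspace X"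
    proof
      fix y assume "y \<in> {y \<in> topspace X. infdist v (\<kappa> y) < r}"
      then have y: "y \<in> topspace X" and "infdist v (\<kappa> y) < r" by auto
      then obtain w where w: "w \<in> \<kappa> y" "dist v w < r"
        using infdist_less_iff[OF fibre_nonempty[OF y]] by blast
      then have "w \<in> U" using r(2) fibre_subset[OF y] by (auto simp: dist_commute)
      then show "y \<in> \<kappa> -` W \<inter> topspace X" using y w(1) csubspace_fibre[OF y] U(2) by blast
    qed
    moreover have "x0 \<in> {y \<in> topspace X. infdist v (\<kappa> y) < r}" using x0 v(1) r(1) by simp
    ultimately show "\<exists>T. openin X T \<and> x0 \<in> T \<and> T \<subseteq> \<kappa> -` W \<inter> topspace X"
      using usc[OF subsetD[OF fibre_subset[OF x0] v(1)], of r] by blast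
  qed
next
  fix V assume "V \<in> \<kappa> ` topspace X"
  then obtain x where x: "x \<in> topspace X" "V = \<kappa> x" by blast
  have "openin (subtopology euclidean B) B" by (metis openin_topspace topspace_euclidean_subtopology)
  then show "V \<in> \<Union>{{V. csubspace_in B sm V \<and> V \<inter> U \<noteq> {}} |U. openin (subtopology euclidean B) U}"
    using csubspace_fibre[OF x(1)] fibre_zero[OF x(1)] fibre_subset[OF x(1)] x(2) by blast
qed

end

lemma prod_topology_nbhd:
  assumes P: "openin (prod_topology (subtopology euclidean B) X) P" and ax: "(a, x) \<in> P"
  shows "\<exists>r>0. \<exists>N. openin X N \<and> x \<in> N \<and> (\<forall>b\<in>B. \<forall>y\<in>N. dist b a < r \<longrightarrow> (b, y) \<in> P)"
proof -
  obtain U N where UN: "openin (subtopology euclidean B) U" "openin X N" "a \<in> U" "x \<in> N" "U \<times> N \<subseteq> P"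
    using P ax by (metis openin_prod_topology_alt)
  obtain r where "r > 0" "\<forall>b\<in>B. dist b a < r \<longrightarrow> b \<in> U"
    using UN(1,3) unfolding openin_euclidean_subtopology_iff by (elim conjE) blast
  then show ?thesis using UN(2,4,5) by blast
qed

locale quotient_bundle = quotient_fibres B sm X \<kappa>
  for B :: "'b::banach set" and sm and X :: "'x topology" and \<kappa> +
  assumes closed_B: "closed B" and qvb: "quotient_vector_bundle X B sm \<kappa>"
begin

lemma lower_vietoris_nbhd:
  assumes x: "x \<in> topspace X" and v: "v \<in> \<kappa> x" and r: "r > 0"
  shows "\<exists>N. openin X N \<and> x \<in> N \<and> (\<forall>y\<in>N. \<exists>w\<in>\<kappa> y. dist v w < r)"
proof -
  define W where "W = {V. csubspace_in B sm V \<and> V \<inter> (B \<inter> ball v r) \<noteq> {}}"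
  have "openin (lower_vietoris B sm) W"
    unfolding lower_vietoris_def W_def
    by (rule topology_generated_by_Basis) (auto simp: openin_open_Int)
  then have "openin X {y \<in> topspace X. \<kappa> y \<in> W}"
    using qvb unfolding quotient_vector_bundle_def by (blast intro: openin_continuous_map_preimage)
  moreover have "\<kappa> x \<in> W"
    unfolding W_def using csubspace_fibre[OF x] fibre_subset[OF x] v r by auto
  moreover have "\<exists>w\<in>\<kappa> y. dist v w < r" if "\<kappa> y \<in> W" for y
    using that unfolding W_def by (auto simp: dist_commute)
  ultimately show ?thesis using x by blast
qed

lemma infdist_usc: "openin X {y \<in> topspace X. infdist a (\<kappa> y) < t}"
proof (subst openin_subopen, intro ballI)
  fix x assume "x \<in> {y \<in> topspace X. infdist a (\<kappa> y) < t}"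
  then have x: "x \<in> topspace X" and "infdist a (\<kappa> x) < t" by auto
  then obtain v where v: "v \<in> \<kappa> x" "dist a v < t" using infdist_less_iff[OF fibre_nonempty[OF x]] by blast
  obtain N where N: "openin X N" "x \<in> N" "\<forall>y\<in>N. \<exists>w\<in>\<kappa> y. dist v w < t - dist a v"
    using lower_vietoris_nbhd[OF x v(1), of "t - dist a v"] v(2) by auto
  have "infdist a (\<kappa> y) < t" if "y \<in> N" for y
  proof -
    obtain w where "w \<in> \<kappa> y" "dist v w < t - dist a v" using N(3) \<open>y \<in> N\<close> by blast
    then show ?thesis using infdist_le[of w "\<kappa> y" a] dist_triangle[of a w v] by linarith
  qed
  then show "\<exists>T. openin X T \<and> x \<in> T \<and> T \<subseteq> {y \<in> topspace X. infdist a (\<kappa> y) < t}"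
    using N openin_subset[OF N(1)] by blast
qed

definition tube :: "'x set \<Rightarrow> 'b \<Rightarrow> real \<Rightarrow> ('x \<times> 'b set) set" where
  "tube N a r = {coset \<kappa> z b | b z. b \<in> B \<inter> ball a r \<and> z \<in> N}"

lemma coset_in_tube: "b \<in> B \<Longrightarrow> dist a b < r \<Longrightarrow> z \<in> N \<Longrightarrow> coset \<kappa> z b \<in> tube N a r"
  unfolding tube_def by fastforce

lemma tubeE:
  assumes "e \<in> tube N a r"
  obtains b z where "b \<in> B" "dist a b < r" "z \<in> N" "e = coset \<kappa> z b"
  using assms unfolding tube_def by auto

lemma openin_tube:
  assumes N: "openin X N"
  shows "openin (Etop X B \<kappa>) (tube N a r)"
proof -
  have NX: "N \<subseteq> topspace X" using N by (rule openin_subset)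
  define P where "P = {p \<in> B \<times> topspace X. coset \<kappa> (snd p) (fst p) \<in> tube N a r}"
  have "openin (prod_topology (subtopology euclidean B) X) P"
    unfolding openin_prod_topology_alt
  proof (intro allI impI)
    fix b0 y0 assume "(b0, y0) \<in> P"
    then have b0: "b0 \<in> B" and y0: "y0 \<in> topspace X" and b0_tube: "coset \<kappa> y0 b0 \<in> tube N a r"
      unfolding P_def by auto
    obtain a0 z where a0: "a0 \<in> B" "dist a a0 < r" "z \<in> N" "coset \<kappa> y0 b0 = coset \<kappa> z a0"
      using b0_tube by (rule tubeE)
    have "z = y0" using arg_cong[OF a0(4), of fst] by simp
    define \<rho> where "\<rho> = r - dist a a0"
    have \<rho>: "\<rho> > 0" using a0(2) unfolding \<rho>_def by simp
    have "b0 - a0 \<in> \<kappa> y0" using a0(4) coset_eq_iff[OF y0] \<open>z = y0\<close> by blast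
    then have "a0 - b0 \<in> \<kappa> y0" using fibre_minus[OF y0] by fastforce
    then obtain N' where N': "openin X N'" "y0 \<in> N'" "\<forall>y\<in>N'. \<exists>w\<in>\<kappa> y. dist (a0 - b0) w < \<rho> / 2"
      using lower_vietoris_nbhd[OF y0, of "a0 - b0" "\<rho> / 2"] \<rho> by auto
    have "(b, y) \<in> P" if b: "b \<in> B \<inter> ball b0 (\<rho> / 2)" and y: "y \<in> N \<inter> N'" for b y
    proof -
      have yX: "y \<in> topspace X" using NX y by blast
      obtain w where w: "w \<in> \<kappa> y" "dist (a0 - b0) w < \<rho> / 2" using N'(3) y by blast
      have "dist (b + w) a0 \<le> dist b b0 + dist w (a0 - b0)"
        using norm_triangle_ineq[of "b - b0" "w - (a0 - b0)"] by (simp add: dist_norm algebra_simps)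
      also have "\<dots> < \<rho>" using b w(2) by (simp add: dist_commute)
      finally have "dist a (b + w) < r"
        using dist_triangle[of a "b + w" a0] unfolding \<rho>_def by (simp add: dist_commute)
      moreover have "b + w \<in> B" using b fibre_subset[OF yX] w(1) subspace_add[OF subspace_S] by blast
      ultimately have "coset \<kappa> y (b + w) \<in> tube N a r" using y by (blast intro: coset_in_tube)
      then show ?thesis unfolding P_def using b yX coset_add_fibre[OF yX w(1)] by simp
    qed
    moreover have "openin (subtopology euclidean B) (B \<inter> ball b0 (\<rho> / 2))"
      by (simp add: openin_open_Int)
    moreover have "openin X (N \<inter> N')" "b0 \<in> B \<inter> ball b0 (\<rho> / 2)" "y0 \<in> N \<inter> N'"
      using b0 \<rho> a0(3) \<open>z = y0\<close> N'(1,2) N by auto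
    ultimately show "\<exists>U V. openin (subtopology euclidean B) U \<and> openin X V \<and> b0 \<in> U \<and> y0 \<in> V
        \<and> U \<times> V \<subseteq> P"
      by blast
  qed
  moreover have "tube N a r \<subseteq> Etot X B \<kappa>" unfolding tube_def using NX coset_in_Etot by blast
  ultimately show ?thesis unfolding openin_Etop Eopen_def P_def by blast
qed

lemma Etop_nbhd_coset:
  assumes U: "openin (Etop X B \<kappa>) U" and y: "y \<in> topspace X" and a: "a \<in> B"
    and aU: "coset \<kappa> y a \<in> U"
  shows "\<exists>r>0. \<exists>N. openin X N \<and> y \<in> N \<and> (\<forall>b\<in>B. \<forall>z\<in>N. dist b a < r \<longrightarrow> coset \<kappa> z b \<in> U)"
proof -
  define P where "P = {p \<in> B \<times> topspace X. coset \<kappa> (snd p) (fst p) \<in> U}"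
  have "openin (prod_topology (subtopology euclidean B) X) P"
    using U unfolding openin_Etop Eopen_def P_def by blast
  moreover have "(a, y) \<in> P" using y a aU unfolding P_def by simp
  ultimately have "\<exists>r>0. \<exists>N. openin X N \<and> y \<in> N \<and> (\<forall>b\<in>B. \<forall>z\<in>N. dist b a < r \<longrightarrow> (b, z) \<in> P)"
    by (rule prod_topology_nbhd)
  then show ?thesis unfolding P_def by (simp, meson)
qed

lemma limitin_Ezero:
  assumes x: "x \<in> topspace X" and F: "eventually (\<lambda>e. e \<in> Etot X B \<kappa>) F"
    and norm_lim: "(Enorm \<longlongrightarrow> 0) F" and base_lim: "limitin X fst x F"
  shows "limitin (Etop X B \<kappa>) (\<lambda>e. e) (Ezero \<kappa> x) F"
  unfolding limitin_def
proof (intro conjI allI impI)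
  show "Ezero \<kappa> x \<in> topspace (Etop X B \<kappa>)"
    unfolding Ezero_coset topspace_Etop using coset_in_Etot[OF x subspace_0[OF subspace_S]] .
  fix U assume U: "openin (Etop X B \<kappa>) U \<and> Ezero \<kappa> x \<in> U"
  then obtain r N where rN: "r > 0" "openin X N" "x \<in> N"
    "\<forall>b\<in>B. \<forall>z\<in>N. dist b 0 < r \<longrightarrow> coset \<kappa> z b \<in> U"
    using Etop_nbhd_coset[OF _ x subspace_0[OF subspace_S]] Ezero_coset by metis
  have "eventually (\<lambda>e. fst e \<in> N) F" using base_lim rN(2,3) unfolding limitin_def by blast
  moreover have "eventually (\<lambda>e. Enorm e < r) F" using order_tendstoD(2)[OF norm_lim rN(1)] .
  ultimately show "eventually (\<lambda>e. e \<in> U) F"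
    using F
  proof eventually_elim
    case (elim e)
    then obtain a where a: "fst e \<in> topspace X" "a \<in> B" "e = coset \<kappa> (fst e) a" by (metis EtotE)
    then have "infdist a (\<kappa> (fst e)) < r" using elim(2) Enorm_coset by metis
    then obtain v where v: "v \<in> \<kappa> (fst e)" "dist a v < r"
      using infdist_less_iff[OF fibre_nonempty[OF a(1)]] by blast
    have "a - v \<in> B" using a(2) v(1) fibre_subset[OF a(1)] subspace_diff[OF subspace_S] by blast
    then have "coset \<kappa> (fst e) (a - v) \<in> U" using rN(4) elim(1) v(2) by (simp add: dist_norm)
    then show ?case using a(3) coset_add_fibre[OF a(1) fibre_minus[OF a(1) v(1)], of a] by simp
  qed
qed

lemma fibre_pairE:
  assumes "p \<in> {(e, f). e \<in> Etot X B \<kappa> \<and> f \<in> Etot X B \<kappa> \<and> fst e = fst f}"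
  obtains y a b where "y \<in> topspace X" "a \<in> B" "b \<in> B" "p = (coset \<kappa> y a, coset \<kappa> y b)"
proof -
  obtain e f where "p = (e, f)" "e \<in> Etot X B \<kappa>" "f \<in> Etot X B \<kappa>" "fst e = fst f"
    using assms by blast
  then show thesis using that by (metis EtotE)
qed

lemma Eadd_tube:
  assumes "e \<in> Etot X B \<kappa>" "fst e = fst f"
    and "e \<in> tube N a (r / 2)" "f \<in> tube N b (r / 2)"
  obtains z c where "z \<in> N" "c \<in> B" "dist (a + b) c < r" "Eadd e f = coset \<kappa> z c"
proof -
  obtain a' z where a': "a' \<in> B" "dist a a' < r / 2" "z \<in> N" "e = coset \<kappa> z a'"
    using assms(3) by (rule tubeE)
  obtain b' z' where b': "b' \<in> B" "dist b b' < r / 2" "f = coset \<kappa> z' b'"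
    using assms(4) by (rule tubeE)
  have "z' = z" using assms(2) a'(4) b'(3) by simp
  moreover have "z \<in> topspace X" using assms(1) a'(4) by (metis EtotE fst_coset)
  ultimately have "Eadd e f = coset \<kappa> z (a' + b')" using a'(4) b'(3) Eadd_coset by simp
  moreover have "dist (a + b) (a' + b') < r"
    using dist_triangle_add[of a b a' b'] a'(2) b'(2) by simp
  ultimately show thesis using that a'(1,3) b'(1) subspace_add[OF subspace_S] by blast
qed

lemma continuous_Eadd:
  "continuous_map
     (subtopology (prod_topology (Etop X B \<kappa>) (Etop X B \<kappa>))
        {(e, f). e \<in> Etot X B \<kappa> \<and> f \<in> Etot X B \<kappa> \<and> fst e = fst f})
     (Etop X B \<kappa>) (\<lambda>(e, f). Eadd e f)"
    (is "continuous_map (subtopology ?E2 ?Fib) _ _")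
proof -
  have top: "topspace (subtopology ?E2 ?Fib) = ?Fib" by (auto simp: topspace_Etop)
  have add_coset: "(\<lambda>(e, f). Eadd e f) (coset \<kappa> y a, coset \<kappa> y b) = coset \<kappa> y (a + b)"
    if "y \<in> topspace X" for y a b
    using Eadd_coset[OF that] by simp
  show ?thesis unfolding continuous_map_def
  proof (intro conjI allI impI Pi_I)
    fix p assume "p \<in> topspace (subtopology ?E2 ?Fib)"
    then obtain y a b where "y \<in> topspace X" "a \<in> B" "b \<in> B" "p = (coset \<kappa> y a, coset \<kappa> y b)"
      unfolding top by (rule fibre_pairE)
    then show "(\<lambda>(e, f). Eadd e f) p \<in> topspace (Etop X B \<kappa>)"
      using add_coset coset_in_Etot subspace_add[OF subspace_S] topspace_Etop by simp
  next
    fix U assume U: "openin (Etop X B \<kappa>) U"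
    show "openin (subtopology ?E2 ?Fib) {p \<in> topspace (subtopology ?E2 ?Fib). (\<lambda>(e, f). Eadd e f) p \<in> U}"
    proof (subst openin_subopen, intro ballI)
      fix p assume p_in: "p \<in> {p \<in> topspace (subtopology ?E2 ?Fib). (\<lambda>(e, f). Eadd e f) p \<in> U}"
      then have "p \<in> ?Fib" unfolding top by blast
      then obtain y a b where y: "y \<in> topspace X" and ab: "a \<in> B" "b \<in> B"
        and p: "p = (coset \<kappa> y a, coset \<kappa> y b)"
        by (rule fibre_pairE)
      then have "coset \<kappa> y (a + b) \<in> U" using p_in add_coset[OF y] by simp
      then obtain r N where rN: "r > 0" "openin X N" "y \<in> N"
        "\<forall>c\<in>B. \<forall>z\<in>N. dist c (a + b) < r \<longrightarrow> coset \<kappa> z c \<in> U"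
        using Etop_nbhd_coset[OF U y subspace_add[OF subspace_S ab]] by blast
      define T where "T = (tube N a (r / 2) \<times> tube N b (r / 2)) \<inter> ?Fib"
      have "openin (subtopology ?E2 ?Fib) T"
        unfolding T_def by (intro openin_subtopology_Int) (simp add: openin_prod_Times_iff openin_tube rN(2))
      moreover have "p \<in> T"
        unfolding T_def p using y ab rN(1,3) by (auto intro!: coset_in_tube coset_in_Etot)
      moreover have "T \<subseteq> {p \<in> topspace (subtopology ?E2 ?Fib). (\<lambda>(e, f). Eadd e f) p \<in> U}"
      proof
        fix q assume q: "q \<in> T"
        then obtain e f where ef: "q = (e, f)" "e \<in> Etot X B \<kappa>" "fst e = fst f"
          "e \<in> tube N a (r / 2)" "f \<in> tube N b (r / 2)"
          unfolding T_def by auto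
        obtain z c where "z \<in> N" "c \<in> B" "dist (a + b) c < r" "(\<lambda>(e, f). Eadd e f) q = coset \<kappa> z c"
          using Eadd_tube[OF ef(2-5)] unfolding ef(1) by auto
        then show "q \<in> {p \<in> topspace (subtopology ?E2 ?Fib). (\<lambda>(e, f). Eadd e f) p \<in> U}"
          using q top rN(4) unfolding T_def by (auto simp: dist_commute)
      qed
      ultimately show "\<exists>T. openin (subtopology ?E2 ?Fib) T \<and> p \<in> T
          \<and> T \<subseteq> {p \<in> topspace (subtopology ?E2 ?Fib). (\<lambda>(e, f). Eadd e f) p \<in> U}"
        by blast
    qed
  qed
qed

lemma scalar_EtotE:
  assumes "p \<in> UNIV \<times> Etot X B \<kappa>"
  obtains c y a where "y \<in> topspace X" "a \<in> B" "p = (c, coset \<kappa> y a)"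
proof -
  obtain a where "fst (snd p) \<in> topspace X" "a \<in> B" "snd p = coset \<kappa> (fst (snd p)) a"
    using assms by (auto elim: EtotE)
  then show thesis using that[of "fst (snd p)" a "fst p"] by (metis prod.collapse)
qed

lemma continuous_Esmul:
  "continuous_map (prod_topology euclidean (Etop X B \<kappa>)) (Etop X B \<kappa>) (\<lambda>(c, e). Esmul sm \<kappa> c e)"
    (is "continuous_map ?CE _ _")
proof -
  have top: "topspace ?CE = UNIV \<times> Etot X B \<kappa>" by (simp add: topspace_Etop)
  have smul_coset: "(\<lambda>(c, e). Esmul sm \<kappa> c e) (c, coset \<kappa> y a) = coset \<kappa> y (sm c a)"
    if "y \<in> topspace X" "a \<in> B" for c y a
    using Esmul_coset[OF that] by simp
  show ?thesis unfolding continuous_map_def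
  proof (intro conjI allI impI Pi_I)
    fix p assume "p \<in> topspace ?CE"
    then obtain c y a where "y \<in> topspace X" "a \<in> B" "p = (c, coset \<kappa> y a)"
      unfolding top by (rule scalar_EtotE)
    then show "(\<lambda>(c, e). Esmul sm \<kappa> c e) p \<in> topspace (Etop X B \<kappa>)"
      using smul_coset coset_in_Etot sm_closed topspace_Etop by simp
  next
    fix U assume U: "openin (Etop X B \<kappa>) U"
    show "openin ?CE {p \<in> topspace ?CE. (\<lambda>(c, e). Esmul sm \<kappa> c e) p \<in> U}"
    proof (subst openin_subopen, intro ballI)
      fix p assume p_in: "p \<in> {p \<in> topspace ?CE. (\<lambda>(c, e). Esmul sm \<kappa> c e) p \<in> U}"
      then have "p \<in> UNIV \<times> Etot X B \<kappa>" unfolding top by blast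
      then obtain c0 y a0 where y: "y \<in> topspace X" and a0: "a0 \<in> B" and p: "p = (c0, coset \<kappa> y a0)"
        by (rule scalar_EtotE)
      then have "coset \<kappa> y (sm c0 a0) \<in> U" using p_in smul_coset by simp
      then obtain r N where rN: "r > 0" "openin X N" "y \<in> N"
        "\<forall>b\<in>B. \<forall>z\<in>N. dist b (sm c0 a0) < r \<longrightarrow> coset \<kappa> z b \<in> U"
        using Etop_nbhd_coset[OF U y sm_closed[OF a0]] by blast
      obtain \<delta> where \<delta>: "\<delta> > 0"
        "\<And>c a. a \<in> B \<Longrightarrow> dist c c0 < \<delta> \<Longrightarrow> dist a a0 < \<delta> \<Longrightarrow> dist (sm c a) (sm c0 a0) < r"
        using sm_continuous[OF a0 rN(1), of c0] by blast
      define T where "T = ball c0 \<delta> \<times> tube N a0 \<delta>"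
      have "openin ?CE T" unfolding T_def by (simp add: openin_prod_Times_iff openin_tube rN(2))
      moreover have "p \<in> T" unfolding T_def p using a0 \<delta>(1) rN(3) by (simp add: coset_in_tube)
      moreover have "T \<subseteq> {p \<in> topspace ?CE. (\<lambda>(c, e). Esmul sm \<kappa> c e) p \<in> U}"
      proof
        fix q assume "q \<in> T"
        then obtain c a z where q: "q = (c, coset \<kappa> z a)" "dist c0 c < \<delta>" "a \<in> B" "dist a0 a < \<delta>" "z \<in> N"
          unfolding T_def by (auto elim!: tubeE)
        have z: "z \<in> topspace X" using openin_subset[OF rN(2)] q(5) by blast
        have "dist c c0 < \<delta>" "dist a a0 < \<delta>" using q(2,4) by (simp_all add: dist_commute)
        then have "dist (sm c a) (sm c0 a0) < r" by (rule \<delta>(2)[OF q(3)])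
        then have "coset \<kappa> z (sm c a) \<in> U" using rN(4) sm_closed[OF q(3)] q(5) by blast
        then show "q \<in> {p \<in> topspace ?CE. (\<lambda>(c, e). Esmul sm \<kappa> c e) p \<in> U}"
          unfolding top q(1) using smul_coset[OF z q(3)] coset_in_Etot[OF z q(3)] by simp
      qed
      ultimately show "\<exists>T. openin ?CE T \<and> p \<in> T \<and> T \<subseteq> {p \<in> topspace ?CE. (\<lambda>(c, e). Esmul sm \<kappa> c e) p \<in> U}"
        by blast
    qed
  qed
qed

end

lemma openin_prod_sublevel:
  fixes f :: "'b::metric_space \<Rightarrow> 'x \<Rightarrow> real"
  assumes lip: "\<And>a b y. y \<in> topspace X \<Longrightarrow> f a y \<le> f b y + dist a b"
    and sublevel_open: "\<And>a s. a \<in> B \<Longrightarrow> openin X {y \<in> topspace X. f a y < s}"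
  shows "openin (prod_topology (subtopology euclidean B) X) {p \<in> B \<times> topspace X. f (fst p) (snd p) < t}"
  unfolding openin_prod_topology_alt
proof (intro allI impI)
  fix a0 y0 assume "(a0, y0) \<in> {p \<in> B \<times> topspace X. f (fst p) (snd p) < t}"
  then have a0: "a0 \<in> B" "y0 \<in> topspace X" "f a0 y0 < t" by auto
  define \<epsilon> where "\<epsilon> = (t - f a0 y0) / 2"
  have \<epsilon>: "\<epsilon> > 0" using a0(3) unfolding \<epsilon>_def by simp
  define N where "N = {y \<in> topspace X. f a0 y < t - \<epsilon>}"
  have "(B \<inter> ball a0 \<epsilon>) \<times> N \<subseteq> {p \<in> B \<times> topspace X. f (fst p) (snd p) < t}"
  proof
    fix p assume "p \<in> (B \<inter> ball a0 \<epsilon>) \<times> N"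
    then obtain a y where "p = (a, y)" "a \<in> B" "dist a0 a < \<epsilon>" "y \<in> topspace X" "f a0 y < t - \<epsilon>"
      unfolding N_def by auto
    then show "p \<in> {p \<in> B \<times> topspace X. f (fst p) (snd p) < t}"
      using lip[of y a a0] by (simp add: dist_commute)
  qed
  moreover have "openin X N" unfolding N_def by (rule sublevel_open[OF a0(1)])
  moreover have "y0 \<in> N" "a0 \<in> B \<inter> ball a0 \<epsilon>" unfolding N_def \<epsilon>_def using a0 by (auto simp: field_simps)
  ultimately show "\<exists>U V. openin (subtopology euclidean B) U \<and> openin X V \<and> a0 \<in> U \<and> y0 \<in> V
      \<and> U \<times> V \<subseteq> {p \<in> B \<times> topspace X. f (fst p) (snd p) < t}"
    by (meson openin_open_Int open_ball)
qed

lemma geometric_cauchy_indices: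
  fixes d :: "nat \<Rightarrow> nat \<Rightarrow> real"
  assumes "\<forall>\<epsilon>>0. \<exists>N. \<forall>m\<ge>N. \<forall>n\<ge>N. d m n < \<epsilon>"
  shows "\<exists>nk. (\<forall>k. nk k \<le> nk (Suc k)) \<and> (\<forall>k m n. nk k \<le> m \<longrightarrow> nk k \<le> n \<longrightarrow> d m n < (1/2) ^ k)"
proof -
  have "\<forall>k. \<exists>N. \<forall>m\<ge>N. \<forall>n\<ge>N. d m n < (1/2) ^ k"
  proof
    fix k :: nat
    have "(1/2 :: real) ^ k > 0" by simp
    then show "\<exists>N. \<forall>m\<ge>N. \<forall>n\<ge>N. d m n < (1/2) ^ k" using assms by blast
  qed
  then obtain N where N: "\<forall>k. \<forall>m\<ge>N k. \<forall>n\<ge>N k. d m n < (1/2) ^ k"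
    using choice[of "\<lambda>k N. \<forall>m\<ge>N. \<forall>n\<ge>N. d m n < (1/2) ^ k"] by blast
  define nk where "nk k = (\<Sum>j\<le>k. N j)" for k
  have N_le: "N k \<le> nk k" for k unfolding nk_def by (rule member_le_sum) auto
  have "nk k \<le> nk (Suc k)" for k unfolding nk_def by simp
  moreover have "d m n < (1/2) ^ k" if "nk k \<le> m" "nk k \<le> n" for k m n
    using N le_trans[OF N_le that(1)] le_trans[OF N_le that(2)] by blast
  ultimately show ?thesis by blast
qed

lemma tendsto_zero_of_cauchy_subseq:
  fixes p :: "'a::ab_group_add \<Rightarrow> real"
  assumes p_add: "\<And>u w. p (u + w) \<le> p u + p w" and p_nonneg: "\<And>u. 0 \<le> p u"
    and fast: "\<And>k m n. nk k \<le> m \<Longrightarrow> nk k \<le> n \<Longrightarrow> p (a m - a n) < (1/2) ^ k"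
    and subseq: "(\<lambda>k. p (a (nk k) - b)) \<longlonglongrightarrow> 0"
  shows "(\<lambda>n. p (a n - b)) \<longlonglongrightarrow> 0"
proof (rule LIMSEQ_I)
  fix r :: real assume r: "r > 0"
  obtain K0 where K0: "\<And>k. k \<ge> K0 \<Longrightarrow> p (a (nk k) - b) < r / 2"
    using LIMSEQ_D[OF subseq, of "r / 2"] r p_nonneg by auto
  obtain K1 where K1: "(1/2 :: real) ^ K1 < r / 2" using real_arch_pow_inv[of "r / 2" "1 / 2"] r by auto
  define K where "K = max K0 K1"
  have "(1/2 :: real) ^ K \<le> (1/2) ^ K1" unfolding K_def by (rule power_decreasing) auto
  have "p (a n - b) < r" if "n \<ge> nk K" for n
  proof -
    have "a n - b = (a n - a (nk K)) + (a (nk K) - b)" by simp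
    then have "p (a n - b) \<le> p (a n - a (nk K)) + p (a (nk K) - b)" by (simp only:) (rule p_add)
    also have "\<dots> < (1/2) ^ K + r / 2" using fast[OF that order_refl] K0[of K] unfolding K_def by simp
    finally show ?thesis using \<open>(1/2 :: real) ^ K \<le> (1/2) ^ K1\<close> K1 by linarith
  qed
  then show "\<exists>no. \<forall>n\<ge>no. norm (p (a n - b) - 0) < r" using p_nonneg by auto
qed

context quotient_bundle
begin

lemma openin_Etop_Enorm:
  assumes "openin (prod_topology (subtopology euclidean B) X)
             {p \<in> B \<times> topspace X. Q (infdist (fst p) (\<kappa> (snd p)))}"
  shows "openin (Etop X B \<kappa>) {e \<in> topspace (Etop X B \<kappa>). Q (Enorm e)}"
proof -
  have "{p \<in> B \<times> topspace X. coset \<kappa> (snd p) (fst p) \<in> {e \<in> Etot X B \<kappa>. Q (Enorm e)}}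
      = {p \<in> B \<times> topspace X. Q (infdist (fst p) (\<kappa> (snd p)))}"
    using coset_in_Etot Enorm_coset by auto
  then show ?thesis unfolding openin_Etop topspace_Etop Eopen_def using assms by auto
qed

lemma continuous_Enorm:
  assumes lsc: "\<And>a t. a \<in> B \<Longrightarrow> openin X {y \<in> topspace X. t < infdist a (\<kappa> y)}"
  shows "continuous_map (Etop X B \<kappa>) euclideanreal Enorm"
  unfolding continuous_map_upper_lower_semicontinuous_lt
proof (intro conjI allI)
  fix t :: real
  have "openin X {y \<in> topspace X. - infdist a (\<kappa> y) < s}" if "a \<in> B" for a s
    using lsc[OF that, of "- s"] by (simp add: minus_less_iff)
  then have "openin (prod_topology (subtopology euclidean B) X)
      {p \<in> B \<times> topspace X. - infdist (fst p) (\<kappa> (snd p)) < - t}"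
    by (intro openin_prod_sublevel) (use infdist_triangle dist_commute in \<open>smt (verit)\<close>)
  then show "openin (Etop X B \<kappa>) {e \<in> topspace (Etop X B \<kappa>). t < Enorm e}"
    using openin_Etop_Enorm[of "\<lambda>d. - d < - t"] by simp
next
  fix t :: real
  have "openin (prod_topology (subtopology euclidean B) X)
      {p \<in> B \<times> topspace X. infdist (fst p) (\<kappa> (snd p)) < t}"
    by (intro openin_prod_sublevel infdist_usc infdist_triangle)
  then show "openin (Etop X B \<kappa>) {e \<in> topspace (Etop X B \<kappa>). Enorm e < t}"
    using openin_Etop_Enorm[of "\<lambda>d. d < t"] by simp
qed

text \<open>Completeness of a fibre \<open>B / \<kappa> x\<close>: the steps of a geometrically fast sequence are
  corrected by vectors of \<open>\<kappa> x\<close> into an absolutely summable series in the Banach space \<open>B\<close>.\<close>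
lemma infdist_fibre_geometric_limit:
  assumes x: "x \<in> topspace X" and a: "\<And>n. a n \<in> B"
    and steps: "\<And>k. infdist (a (Suc k) - a k) (\<kappa> x) < (1/2) ^ k"
  shows "\<exists>b\<in>B. (\<lambda>n. infdist (a n - b) (\<kappa> x)) \<longlonglongrightarrow> 0"
proof -
  have "\<forall>k. \<exists>v. v \<in> \<kappa> x \<and> dist (a (Suc k) - a k) v < (1/2) ^ k"
    using steps unfolding infdist_less_iff[OF fibre_nonempty[OF x]] by blast
  then obtain v where v: "\<And>k. v k \<in> \<kappa> x" "\<And>k. dist (a (Suc k) - a k) (v k) < (1/2) ^ k"
    using choice[of "\<lambda>k v. v \<in> \<kappa> x \<and> dist (a (Suc k) - a k) v < (1/2) ^ k"] by blast
  define d where "d k = a (Suc k) - a k - v k" for k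
  have d_B: "d k \<in> B" for k
    unfolding d_def using a v(1) fibre_subset[OF x] by (blast intro: subspace_diff[OF subspace_S])
  have "norm (d k) \<le> (1/2) ^ k" for k using v(2)[of k] by (simp add: d_def dist_norm)
  then have "summable d"
    by (intro summable_comparison_test'[OF summable_geometric[of "1/2 :: real"]]) auto
  then have partial: "(\<lambda>K. \<Sum>k<K. d k) \<longlonglongrightarrow> suminf d" by (rule summable_LIMSEQ)
  have "suminf d \<in> B"
    using closed_B subspace_sum[OF subspace_S d_B] partial by (rule closed_sequentially)
  define b where "b = a 0 + suminf d"
  have bound: "norm (infdist (a K - b) (\<kappa> x)) \<le> norm ((\<Sum>k<K. d k) - suminf d)" for K
  proof -
    have "a K - a 0 = (\<Sum>k<K. a (Suc k) - a k)" by (rule sum_lessThan_telescope[symmetric])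
    also have "\<dots> = (\<Sum>k<K. d k) + (\<Sum>k<K. v k)" unfolding d_def sum.distrib[symmetric] by simp
    finally have "a K - b = ((\<Sum>k<K. d k) - suminf d) + (\<Sum>k<K. v k)"
      unfolding b_def by (simp add: diff_diff_eq[symmetric] diff_add_eq)
    moreover have "(\<Sum>k<K. v k) \<in> \<kappa> x" by (rule subspace_sum[OF subspace_fibre[OF x] v(1)])
    ultimately show ?thesis
      using infdist_add_fibre[OF x, of "\<Sum>k<K. v k" "(\<Sum>k<K. d k) - suminf d"]
        infdist_fibre_le_norm[OF x, of "(\<Sum>k<K. d k) - suminf d"] by (simp add: infdist_nonneg)
  qed
  have "(\<lambda>K. norm ((\<Sum>k<K. d k) - suminf d)) \<longlonglongrightarrow> 0"
    using tendsto_norm_zero[OF LIM_zero[OF partial]] .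
  then have "(\<lambda>K. infdist (a K - b) (\<kappa> x)) \<longlonglongrightarrow> 0"
    by (rule Lim_null_comparison[OF always_eventually[OF allI[OF bound]]])
  moreover have "b \<in> B"
    unfolding b_def by (rule subspace_add[OF subspace_S a \<open>suminf d \<in> B\<close>])
  ultimately show ?thesis by blast
qed

lemma infdist_fibre_cauchy_limit:
  assumes x: "x \<in> topspace X" and a: "\<And>n. a n \<in> B"
    and cauchy: "\<forall>\<epsilon>>0. \<exists>N. \<forall>m\<ge>N. \<forall>n\<ge>N. infdist (a m - a n) (\<kappa> x) < \<epsilon>"
  shows "\<exists>b\<in>B. (\<lambda>n. infdist (a n - b) (\<kappa> x)) \<longlonglongrightarrow> 0"
proof -
  obtain nk where nk_mono: "\<forall>k. nk k \<le> nk (Suc k)"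
    and fast: "\<forall>k m n. nk k \<le> m \<longrightarrow> nk k \<le> n \<longrightarrow> infdist (a m - a n) (\<kappa> x) < (1/2) ^ k"
    using geometric_cauchy_indices[OF cauchy] by blast
  note fast = fast[rule_format]
  have "infdist (a (nk (Suc k)) - a (nk k)) (\<kappa> x) < (1/2) ^ k" for k
    using fast[OF nk_mono[rule_format] order_refl] .
  from infdist_fibre_geometric_limit[where a = "\<lambda>k. a (nk k)", OF x a this]
  obtain b where b: "b \<in> B" "(\<lambda>k. infdist (a (nk k) - b) (\<kappa> x)) \<longlonglongrightarrow> 0" by blast
  have "(\<lambda>n. infdist (a n - b) (\<kappa> x)) \<longlonglongrightarrow> 0"
    using tendsto_zero_of_cauchy_subseq[where p = "\<lambda>u. infdist u (\<kappa> x)" and nk = nk]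
      infdist_fibre_add_le[OF x] infdist_nonneg fast b(2) by blast
  then show ?thesis using b(1) by blast
qed

lemma Etot_fibre_complete:
  assumes x: "x \<in> topspace X" and s: "\<forall>n. s n \<in> Etot X B \<kappa> \<and> fst (s n) = x"
    and cauchy: "\<forall>\<epsilon>>0. \<exists>N. \<forall>m\<ge>N. \<forall>n\<ge>N. Enorm (Esub sm \<kappa> (s m) (s n)) < \<epsilon>"
  shows "\<exists>e\<in>Etot X B \<kappa>. fst e = x \<and> (\<lambda>n. Enorm (Esub sm \<kappa> (s n) e)) \<longlonglongrightarrow> 0"
proof -
  have "\<forall>n. \<exists>a. a \<in> B \<and> s n = coset \<kappa> x a"
  proof
    fix n
    obtain a where "a \<in> B" "s n = coset \<kappa> (fst (s n)) a" using s by (blast elim: EtotE)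
    then show "\<exists>a. a \<in> B \<and> s n = coset \<kappa> x a" using s by auto
  qed
  then obtain a where a: "\<And>n. a n \<in> B" "\<And>n. s n = coset \<kappa> x (a n)"
    using choice[of "\<lambda>n a. a \<in> B \<and> s n = coset \<kappa> x a"] by blast
  have Esub_eq: "Enorm (Esub sm \<kappa> (coset \<kappa> x u) (coset \<kappa> x w)) = infdist (u - w) (\<kappa> x)"
    if "u \<in> B" "w \<in> B" for u w
    using Esub_coset[OF x that] Enorm_coset[OF x] by simp
  have "\<forall>\<epsilon>>0. \<exists>N. \<forall>m\<ge>N. \<forall>n\<ge>N. infdist (a m - a n) (\<kappa> x) < \<epsilon>"
    using cauchy Esub_eq a by simp
  from infdist_fibre_cauchy_limit[OF x a(1) this]
  obtain b where b: "b \<in> B" "(\<lambda>n. infdist (a n - b) (\<kappa> x)) \<longlonglongrightarrow> 0" by blast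
  then show ?thesis using coset_in_Etot[OF x b(1)] Esub_eq a by (intro bexI[of _ "coset \<kappa> x b"]) auto
qed

theorem banach_bundle_if_infdist_lsc:
  assumes closed_fibres: "\<forall>x\<in>topspace X. closed (\<kappa> x)"
    and lsc: "\<And>a t. a \<in> B \<Longrightarrow> openin X {y \<in> topspace X. t < infdist a (\<kappa> y)}"
  shows "banach_bundle X B sm \<kappa>"
  unfolding banach_bundle_def
proof (intro conjI ballI allI impI)
  fix x e assume "x \<in> topspace X" "e \<in> Etot X B \<kappa>" "fst e = x \<and> Enorm e = 0"
  then show "e = Ezero \<kappa> x" using Enorm_eq_0_imp_Ezero closed_fibres by blast
next
  fix x and s :: "nat \<Rightarrow> 'x \<times> 'b set"
  assume "x \<in> topspace X" "(\<forall>n. s n \<in> Etot X B \<kappa> \<and> fst (s n) = x) \<and>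
    (\<forall>\<epsilon>>0. \<exists>N. \<forall>m\<ge>N. \<forall>n\<ge>N. Enorm (Esub sm \<kappa> (s m) (s n)) < \<epsilon>)"
  then show "\<exists>e\<in>Etot X B \<kappa>. fst e = x \<and> (\<lambda>n. Enorm (Esub sm \<kappa> (s n) e)) \<longlonglongrightarrow> 0"
    using Etot_fibre_complete by blast
next
  fix F x assume "x \<in> topspace X \<and> eventually (\<lambda>e. e \<in> Etot X B \<kappa>) F \<and> (Enorm \<longlongrightarrow> 0) F
    \<and> limitin X fst x F"
  then show "limitin (Etop X B \<kappa>) (\<lambda>e. e) (Ezero \<kappa> x) F" using limitin_Ezero by blast
qed (use continuous_Eadd continuous_Esmul continuous_Enorm[OF lsc] in auto)

end

section \<open>A quotient bundle and its dual\<close>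

lemma quotient_fibres_primal:
  assumes "quotient_vector_bundle X UNIV scaleC \<kappa>"
  shows "quotient_fibres (UNIV :: 'a::{complex_normed_vector, banach} set) scaleC X \<kappa>"
  using assms complex_normed_subspace_UNIV
  unfolding quotient_fibres_def quotient_fibres_axioms_def quotient_vector_bundle_def by blast

lemma quotient_bundle_primal:
  assumes "quotient_vector_bundle X UNIV scaleC \<kappa>"
  shows "quotient_bundle (UNIV :: 'a::{complex_normed_vector, banach} set) scaleC X \<kappa>"
  using assms quotient_fibres_primal unfolding quotient_bundle_def quotient_bundle_axioms_def by blast

lemma quotient_fibres_dual:
  "quotient_fibres (cdual :: ('a::{complex_normed_vector, banach} \<Rightarrow>\<^sub>L complex) set) dual_smul X
     (\<lambda>x. annih (\<kappa> x))"
  using complex_normed_subspace_cdual csubspace_annih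
  unfolding quotient_fibres_def quotient_fibres_axioms_def by blast

lemma quotient_bundle_dual:
  assumes "quotient_vector_bundle X (cdual :: ('a::{complex_normed_vector, banach} \<Rightarrow>\<^sub>L complex) set)
             dual_smul (\<lambda>x. annih (\<kappa> x))"
  shows "quotient_bundle (cdual :: ('a \<Rightarrow>\<^sub>L complex) set) dual_smul X (\<lambda>x. annih (\<kappa> x))"
  using assms quotient_fibres_dual closed_cdual
  unfolding quotient_bundle_def quotient_bundle_axioms_def by blast

lemma small_factor_exists:
  fixes c C :: real
  assumes "c > 0" "C \<ge> 0"
  obtains r where "r > 0" "r * C < c"
proof
  show "c / (C + 1) > 0" using assms by simp
  show "c / (C + 1) * C < c" using assms by (simp add: field_simps)
qed

text \<open>Lower semicontinuity of the distance to the fibres of \<open>\<kappa>\<close> comes from the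
  lower semicontinuity of \<open>\<kappa>\<^sup>\<vee>\<close>: a norming functional at \<open>x0\<close> is approximated by
  annihilating functionals at nearby points.\<close>
lemma infdist_lsc_if_dual_quotient_vector_bundle:
  fixes \<kappa> :: "'x \<Rightarrow> 'a::{complex_normed_vector, banach} set"
  assumes qvb: "quotient_vector_bundle X UNIV scaleC \<kappa>"
    and qvb_dual: "quotient_vector_bundle X (cdual :: ('a \<Rightarrow>\<^sub>L complex) set) dual_smul (\<lambda>x. annih (\<kappa> x))"
  shows "openin X {y \<in> topspace X. t < infdist a (\<kappa> y)}"
proof (subst openin_subopen, intro ballI)
  interpret primal: quotient_bundle UNIV scaleC X \<kappa> by (rule quotient_bundle_primal[OF qvb])
  interpret dual: quotient_bundle cdual dual_smul X "\<lambda>x. annih (\<kappa> x)"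
    by (rule quotient_bundle_dual[OF qvb_dual])
  fix x0 assume "x0 \<in> {y \<in> topspace X. t < infdist a (\<kappa> y)}"
  then have x0: "x0 \<in> topspace X" and t: "t < infdist a (\<kappa> x0)" by auto
  show "\<exists>T. openin X T \<and> x0 \<in> T \<and> T \<subseteq> {y \<in> topspace X. t < infdist a (\<kappa> y)}"
  proof (cases "t < 0")
    case True
    then show ?thesis using x0 infdist_nonneg[of a] by (intro exI[of _ "topspace X"]) (auto intro: less_le_trans)
  next
    case False
    define d where "d = infdist a (\<kappa> x0)"
    obtain \<phi> where \<phi>: "\<phi> \<in> annih (\<kappa> x0)" "norm \<phi> \<le> 1" "blinfun_apply \<phi> a = of_real d"
      using annih_norming_functional[OF primal.csubspace_fibre[OF x0]] d_def by blast
    obtain r where r: "r > 0" "r * (norm a + t) < d - t"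
      using small_factor_exists[of "d - t" "norm a + t"] t False d_def by force
    obtain N where N: "openin X N" "x0 \<in> N" "\<forall>y\<in>N. \<exists>\<psi>\<in>annih (\<kappa> y). dist \<phi> \<psi> < r"
      using dual.lower_vietoris_nbhd[OF x0 \<phi>(1) r(1)] by blast
    have "t < infdist a (\<kappa> y)" if y: "y \<in> N" for y
    proof -
      have yX: "y \<in> topspace X" using openin_subset[OF N(1)] y by blast
      obtain \<psi> where \<psi>: "\<psi> \<in> annih (\<kappa> y)" "dist \<phi> \<psi> < r" using N(3) y by blast
      have "cmod (blinfun_apply (\<phi> - \<psi>) a) \<le> r * norm a"
        using norm_blinfun[of "\<phi> - \<psi>" a] \<psi>(2) mult_right_mono[of "norm (\<phi> - \<psi>)" r "norm a"]
        by (simp add: dist_norm)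
      then have "d - r * norm a \<le> cmod (blinfun_apply \<psi> a)"
        using \<phi>(3) norm_triangle_ineq2[of "blinfun_apply \<phi> a" "blinfun_apply \<psi> a"] infdist_nonneg[of a]
        by (simp add: blinfun.diff_left d_def)
      also have "\<dots> \<le> norm \<psi> * infdist a (\<kappa> y)"
        by (rule norm_apply_le_infdist[OF \<psi>(1) primal.fibre_nonempty[OF yX]])
      also have "\<dots> \<le> (1 + r) * infdist a (\<kappa> y)"
        using norm_triangle_ineq2[of \<psi> \<phi>] \<psi>(2) \<phi>(2) infdist_nonneg[of a]
        by (intro mult_right_mono) (auto simp: dist_norm norm_minus_commute)
      finally have "(1 + r) * t < (1 + r) * infdist a (\<kappa> y)" using r(2) by (simp add: algebra_simps)
      then show ?thesis using r(1) by (simp add: mult_less_cancel_left_pos)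
    qed
    then show ?thesis using N openin_subset[OF N(1)] by blast
  qed
qed

text \<open>The distance from \<open>\<phi>\<close> to the annihilator of \<open>V\<close> is the norm of \<open>\<phi>\<close> restricted
  to \<open>V\<close> (by Hahn--Banach), so a smaller bound is beaten on some vector of \<open>V\<close>.\<close>
lemma annih_infdist_witness:
  fixes V :: "'a::complex_normed_vector set" and \<phi> :: "'a \<Rightarrow>\<^sub>L complex"
  assumes V: "csubspace_in UNIV scaleC V" and \<phi>: "\<phi> \<in> cdual"
    and M: "0 \<le> M" "M < infdist \<phi> (annih V)"
  shows "\<exists>v\<in>V. M * norm v < cmod (blinfun_apply \<phi> v)"
proof (rule ccontr)
  assume "\<not> ?thesis"
  then obtain g where g: "g \<in> cdual" "\<forall>v\<in>V. blinfun_apply g v = blinfun_apply \<phi> v" "norm g \<le> M"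
    using cdual_extension[OF V \<phi> M(1)] by (auto simp: not_less)
  then have "\<phi> - g \<in> annih V"
    using \<phi> unfolding annih_def cdual_def by (simp add: blinfun.bilinear_simps right_diff_distrib)
  then have "infdist \<phi> (annih V) \<le> norm g" using infdist_le[of "\<phi> - g" "annih V" \<phi>] by (simp add: dist_norm)
  then show False using g(3) M(2) by simp
qed

lemma annih_dist_lower_bound:
  fixes \<phi> g :: "'a::complex_normed_vector \<Rightarrow>\<^sub>L complex"
  assumes gw: "blinfun_apply g w = 0" and vw: "dist v w < r" and t: "0 \<le> t"
    and r: "r * (norm \<phi> + t) < cmod (blinfun_apply \<phi> v) - t * norm v"
  shows "t < dist \<phi> g"
proof -
  have "cmod (blinfun_apply \<phi> (v - w)) \<le> norm \<phi> * r"
    using norm_blinfun[of \<phi> "v - w"] vw mult_left_mono[of "norm (v - w)" r "norm \<phi>"]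
    by (simp add: dist_norm)
  then have "cmod (blinfun_apply \<phi> v) - norm \<phi> * r \<le> cmod (blinfun_apply \<phi> w)"
    using norm_triangle_ineq2[of "blinfun_apply \<phi> v" "blinfun_apply \<phi> w"] by (simp add: blinfun.diff_right)
  also have "cmod (blinfun_apply \<phi> w) \<le> dist \<phi> g * norm w"
    using norm_blinfun[of "\<phi> - g" w] gw by (simp add: dist_norm blinfun.diff_left)
  finally have "t * norm w < dist \<phi> g * norm w"
    using r t mult_left_mono[of "norm w" "norm v + r" t] norm_triangle_ineq2[of w v] vw
    by (simp add: dist_norm norm_minus_commute algebra_simps)
  then show ?thesis by (metis mult_less_cancel_right less_le norm_ge_zero not_less)
qed

text \<open>Lower semicontinuity of the distance to the fibres of \<open>\<kappa>\<^sup>\<vee>\<close> comes from the lower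
  semicontinuity of \<open>\<kappa>\<close>: a vector of \<open>\<kappa> x0\<close> witnessing the distance is approximated by
  vectors of nearby fibres.\<close>
lemma infdist_annih_lsc:
  fixes \<kappa> :: "'x \<Rightarrow> 'a::{complex_normed_vector, banach} set"
  assumes qvb: "quotient_vector_bundle X UNIV scaleC \<kappa>" and \<phi>: "\<phi> \<in> cdual"
  shows "openin X {y \<in> topspace X. t < infdist \<phi> (annih (\<kappa> y))}"
proof (subst openin_subopen, intro ballI)
  interpret primal: quotient_bundle UNIV scaleC X \<kappa> by (rule quotient_bundle_primal[OF qvb])
  interpret dual: quotient_fibres cdual dual_smul X "\<lambda>x. annih (\<kappa> x)" by (rule quotient_fibres_dual)
  fix x0 assume "x0 \<in> {y \<in> topspace X. t < infdist \<phi> (annih (\<kappa> y))}"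
  then have x0: "x0 \<in> topspace X" and t: "t < infdist \<phi> (annih (\<kappa> x0))" by auto
  show "\<exists>T. openin X T \<and> x0 \<in> T \<and> T \<subseteq> {y \<in> topspace X. t < infdist \<phi> (annih (\<kappa> y))}"
  proof (cases "t < 0")
    case True
    then show ?thesis using x0 infdist_nonneg[of \<phi>] by (intro exI[of _ "topspace X"]) (auto intro: less_le_trans)
  next
    case False
    define t1 where "t1 = (t + infdist \<phi> (annih (\<kappa> x0))) / 2"
    have t1: "t < t1" "0 \<le> t1" "t1 < infdist \<phi> (annih (\<kappa> x0))" using t False unfolding t1_def by auto
    obtain v where v: "v \<in> \<kappa> x0" "t1 * norm v < cmod (blinfun_apply \<phi> v)"
      using annih_infdist_witness[OF primal.csubspace_fibre[OF x0] \<phi> t1(2,3)] by blast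
    obtain r where r: "r > 0" "r * (norm \<phi> + t1) < cmod (blinfun_apply \<phi> v) - t1 * norm v"
      using small_factor_exists[of "cmod (blinfun_apply \<phi> v) - t1 * norm v" "norm \<phi> + t1"] v(2) t1(2)
      by force
    obtain N where N: "openin X N" "x0 \<in> N" "\<forall>y\<in>N. \<exists>w\<in>\<kappa> y. dist v w < r"
      using primal.lower_vietoris_nbhd[OF x0 v(1) r(1)] by blast
    have "t1 \<le> infdist \<phi> (annih (\<kappa> y))" if y: "y \<in> N" for y
    proof -
      have yX: "y \<in> topspace X" using openin_subset[OF N(1)] y by blast
      obtain w where w: "w \<in> \<kappa> y" "dist v w < r" using N(3) y by blast
      have "t1 < dist \<phi> g" if "g \<in> annih (\<kappa> y)" for g
        using annih_dist_lower_bound[OF _ w(2) t1(2) r(2)] that w(1) unfolding annih_def by blast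
      then show ?thesis by (intro infdist_ge[OF dual.fibre_nonempty[OF yX]] less_imp_le)
    qed
    then show ?thesis using N openin_subset[OF N(1)] t1(1) by fastforce
  qed
qed

theorem banach_bundles_if_dual_quotient_vector_bundle:
  fixes \<kappa> :: "'x \<Rightarrow> 'a::{complex_normed_vector, banach} set"
  assumes qvb: "quotient_vector_bundle X UNIV scaleC \<kappa>" and closed: "\<forall>x\<in>topspace X. closed (\<kappa> x)"
    and qvb_dual: "quotient_vector_bundle X (cdual :: ('a \<Rightarrow>\<^sub>L complex) set) dual_smul (\<lambda>x. annih (\<kappa> x))"
  shows "banach_bundle X UNIV scaleC \<kappa>"
    and "banach_bundle X (cdual :: ('a \<Rightarrow>\<^sub>L complex) set) dual_smul (\<lambda>x. annih (\<kappa> x))"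
proof -
  interpret primal: quotient_bundle UNIV scaleC X \<kappa> by (rule quotient_bundle_primal[OF qvb])
  interpret dual: quotient_bundle cdual dual_smul X "\<lambda>x. annih (\<kappa> x)"
    by (rule quotient_bundle_dual[OF qvb_dual])
  show "banach_bundle X UNIV scaleC \<kappa>"
    using primal.banach_bundle_if_infdist_lsc[OF closed infdist_lsc_if_dual_quotient_vector_bundle[OF qvb qvb_dual]] .
  show "banach_bundle X (cdual :: ('a \<Rightarrow>\<^sub>L complex) set) dual_smul (\<lambda>x. annih (\<kappa> x))"
    using dual.banach_bundle_if_infdist_lsc[OF _ infdist_annih_lsc[OF qvb]] closed_annih by blast
qed

lemma dual_quotient_vector_bundle_if_banach_bundle:
  fixes \<kappa> :: "'x \<Rightarrow> 'a::{complex_normed_vector, banach} set"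
  assumes "banach_bundle X (cdual :: ('a \<Rightarrow>\<^sub>L complex) set) dual_smul (\<lambda>x. annih (\<kappa> x))"
  shows "quotient_vector_bundle X (cdual :: ('a \<Rightarrow>\<^sub>L complex) set) dual_smul (\<lambda>x. annih (\<kappa> x))"
proof -
  interpret dual: quotient_fibres cdual dual_smul X "\<lambda>x. annih (\<kappa> x)" by (rule quotient_fibres_dual)
  show ?thesis
    using dual.banach_bundle_infdist_continuous[OF assms]
    by (intro dual.quotient_vector_bundle_if_infdist_usc)
      (simp add: continuous_map_upper_lower_semicontinuous_lt)
qed

section \<open>Reflexive Frechet smooth spaces\<close>

lemma first_countable_openin_sequentially:
  assumes fc: "first_countable X" and W: "W \<subseteq> topspace X"
    and seq: "\<And>x y. x \<in> W \<Longrightarrow> (\<forall>n. y n \<in> topspace X) \<Longrightarrow> limitin X y x sequentially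
               \<Longrightarrow> eventually (\<lambda>n. y n \<in> W) sequentially"
  shows "openin X W"
proof (subst openin_subopen, intro ballI, rule ccontr)
  fix x assume xW: "x \<in> W" and not_interior: "\<nexists>T. openin X T \<and> x \<in> T \<and> T \<subseteq> W"
  obtain \<B> where \<B>: "countable \<B>" "\<And>V. V \<in> \<B> \<Longrightarrow> openin X V"
    "\<And>U. openin X U \<Longrightarrow> x \<in> U \<Longrightarrow> \<exists>V\<in>\<B>. x \<in> V \<and> V \<subseteq> U"
    using fc xW W unfolding first_countable_def by (metis subsetD)
  define \<B>x where "\<B>x = {V \<in> \<B>. x \<in> V}"
  have "\<B>x \<noteq> {}" using \<B>(3)[OF openin_topspace] xW W unfolding \<B>x_def by blast
  define N where "N n = \<Inter> (from_nat_into \<B>x ` {..n})" for n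
  have N_open: "openin X (N n)" for n
    unfolding N_def using from_nat_into[OF \<open>\<B>x \<noteq> {}\<close>] \<B>(2) \<B>x_def by (intro openin_Inter) auto
  have x_N: "x \<in> N n" for n unfolding N_def using from_nat_into[OF \<open>\<B>x \<noteq> {}\<close>] \<B>x_def by auto
  have "\<forall>n. \<exists>z. z \<in> N n \<and> z \<notin> W" using not_interior N_open x_N by blast
  then obtain y where y: "\<And>n. y n \<in> N n" "\<And>n. y n \<notin> W"
    using choice[of "\<lambda>n z. z \<in> N n \<and> z \<notin> W"] by blast
  have "limitin X y x sequentially"
    unfolding limitin_def
  proof (intro conjI allI impI)
    show "x \<in> topspace X" using xW W by blast
    fix U assume "openin X U \<and> x \<in> U"
    then obtain V where V: "V \<in> \<B>x" "V \<subseteq> U" using \<B>(3) unfolding \<B>x_def by blast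
    then obtain k where "from_nat_into \<B>x k = V"
      using from_nat_into_surj[of \<B>x V] \<B>(1) unfolding \<B>x_def by auto
    then have "N n \<subseteq> U" if "n \<ge> k" for n using V(2) that unfolding N_def by auto
    then show "eventually (\<lambda>n. y n \<in> U) sequentially"
      using y(1) unfolding eventually_sequentially by blast
  qed
  moreover have "\<forall>n. y n \<in> topspace X" using y(1) N_open openin_subset by blast
  ultimately show False using seq[OF xW] y(2) by (metis eventually_sequentially order_refl)
qed

lemma Re_functional_bound_from_norms:
  fixes f :: "'a::real_normed_vector \<Rightarrow>\<^sub>L complex"
  assumes f: "norm f \<le> 1" and \<tau>: "\<tau> > 0"
    and minus: "norm (a - \<tau> *\<^sub>R b) < 1 + \<tau> * (l + \<epsilon>)"
    and plus: "norm (a + \<tau> *\<^sub>R b) < 1 - \<tau> * (l - \<epsilon>)"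
  shows "\<bar>Re (blinfun_apply f b) + l\<bar> < (1 - Re (blinfun_apply f a)) / \<tau> + \<epsilon>"
proof -
  have Re_le: "Re (blinfun_apply f z) \<le> norm z" for z
    using complex_Re_le_cmod[of "blinfun_apply f z"] norm_blinfun[of f z] f
      mult_right_mono[of "norm f" 1 "norm z"] by simp
  have "Re (blinfun_apply f a) - \<tau> * Re (blinfun_apply f b) < 1 + \<tau> * (l + \<epsilon>)"
    using Re_le[of "a - \<tau> *\<^sub>R b"] minus by (simp add: blinfun.diff_right blinfun.scaleR_right)
  moreover have "Re (blinfun_apply f a) + \<tau> * Re (blinfun_apply f b) < 1 - \<tau> * (l - \<epsilon>)"
    using Re_le[of "a + \<tau> *\<^sub>R b"] plus by (simp add: blinfun.add_right blinfun.scaleR_right)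
  ultimately have "\<tau> * (Re (blinfun_apply f b) + l) < (1 - Re (blinfun_apply f a)) + \<tau> * \<epsilon>"
    and "\<tau> * - (Re (blinfun_apply f b) + l) < (1 - Re (blinfun_apply f a)) + \<tau> * \<epsilon>"
    by (simp_all add: algebra_simps)
  then have "Re (blinfun_apply f b) + l < (1 - Re (blinfun_apply f a)) / \<tau> + \<epsilon>"
    and "- (Re (blinfun_apply f b) + l) < (1 - Re (blinfun_apply f a)) / \<tau> + \<epsilon>"
    using \<tau> by (simp_all add: field_simps)
  then show ?thesis by (simp only: abs_less_iff)
qed

lemma frechet_smooth_functional_estimate:
  fixes a :: "'a::complex_normed_vector"
  assumes smooth: "frechet_smooth TYPE('a)" and a: "norm a = 1"
  shows "\<exists>L. \<forall>\<epsilon>>0. \<exists>\<tau>>0. \<forall>(f :: 'a \<Rightarrow>\<^sub>L complex) b. norm f \<le> 1 \<longrightarrow> norm b = 1 \<longrightarrow>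
            \<bar>Re (blinfun_apply f b) + L b\<bar> < (1 - Re (blinfun_apply f a)) / \<tau> + \<epsilon>"
proof -
  obtain L where L: "\<And>\<epsilon>. \<epsilon> > 0 \<Longrightarrow> \<exists>\<delta>0>0. \<forall>b::'a. norm b = 1 \<longrightarrow>
      (\<forall>\<delta>::real. \<delta> \<noteq> 0 \<and> \<bar>\<delta>\<bar> < \<delta>0 \<longrightarrow> \<bar>(norm (a - \<delta> *\<^sub>R b) - norm a) / \<delta> - L b\<bar> < \<epsilon>)"
    using smooth a unfolding frechet_smooth_def by blast
  have "\<exists>\<tau>>0. \<forall>(f :: 'a \<Rightarrow>\<^sub>L complex) b. norm f \<le> 1 \<longrightarrow> norm b = 1 \<longrightarrow>
      \<bar>Re (blinfun_apply f b) + L b\<bar> < (1 - Re (blinfun_apply f a)) / \<tau> + \<epsilon>" if \<epsilon>: "\<epsilon> > 0" for \<epsilon>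
  proof -
    obtain \<delta>0 where \<delta>0: "\<delta>0 > 0" "\<And>b \<delta>. norm b = 1 \<Longrightarrow> \<delta> \<noteq> 0 \<Longrightarrow> \<bar>\<delta>\<bar> < \<delta>0 \<Longrightarrow>
        \<bar>(norm (a - \<delta> *\<^sub>R b) - 1) / \<delta> - L b\<bar> < \<epsilon>"
      using L[OF \<epsilon>] a by auto
    define \<tau> where "\<tau> = \<delta>0 / 2"
    have \<tau>: "\<tau> > 0" "\<bar>\<tau>\<bar> < \<delta>0" "\<bar>- \<tau>\<bar> < \<delta>0" using \<delta>0(1) unfolding \<tau>_def by auto
    have "\<bar>Re (blinfun_apply f b) + L b\<bar> < (1 - Re (blinfun_apply f a)) / \<tau> + \<epsilon>"
      if "norm f \<le> 1" "norm b = 1" for f :: "'a \<Rightarrow>\<^sub>L complex" and b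
    proof (rule Re_functional_bound_from_norms[OF that(1) \<tau>(1)])
      have "(norm (a - \<tau> *\<^sub>R b) - 1) / \<tau> < L b + \<epsilon>"
        using \<delta>0(2)[OF that(2), of \<tau>] \<tau> by linarith
      then have "norm (a - \<tau> *\<^sub>R b) - 1 < (L b + \<epsilon>) * \<tau>"
        by (simp only: pos_divide_less_eq[OF \<tau>(1)])
      then show "norm (a - \<tau> *\<^sub>R b) < 1 + \<tau> * (L b + \<epsilon>)" by (simp add: algebra_simps)
      have "(norm (a + \<tau> *\<^sub>R b) - 1) / \<tau> < \<epsilon> - L b"
        using \<delta>0(2)[OF that(2), of "- \<tau>"] \<tau> by simp
      then have "norm (a + \<tau> *\<^sub>R b) - 1 < (\<epsilon> - L b) * \<tau>"
        by (simp only: pos_divide_less_eq[OF \<tau>(1)])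
      then show "norm (a + \<tau> *\<^sub>R b) < 1 - \<tau> * (L b - \<epsilon>)" by (simp add: algebra_simps)
    qed
    then show ?thesis using \<tau>(1) by blast
  qed
  then show ?thesis by blast
qed

lemma cdual_norm_le_Re_bound:
  fixes h :: "'a::complex_normed_vector \<Rightarrow>\<^sub>L complex"
  assumes h: "h \<in> cdual" and s: "0 \<le> s" and bound: "\<And>b. norm b = 1 \<Longrightarrow> \<bar>Re (blinfun_apply h b)\<bar> \<le> s"
  shows "norm h \<le> 2 * s"
proof (rule norm_blinfun_bound)
  show "0 \<le> 2 * s" using s by simp
  fix b :: 'a
  show "norm (blinfun_apply h b) \<le> 2 * s * norm b"
  proof (cases "b = 0")
    case True
    then show ?thesis by (simp add: blinfun.zero_right)
  next
    case False
    define b1 where "b1 = (1 / norm b) *\<^sub>R b"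
    have b1: "norm b1 = 1" "norm (\<i> *\<^sub>C b1) = 1" using False unfolding b1_def by (simp_all add: norm_scaleC)
    have "Im (blinfun_apply h b1) = - Re (blinfun_apply h (\<i> *\<^sub>C b1))" using cdualD[OF h] by simp
    then have "cmod (blinfun_apply h b1) \<le> \<bar>Re (blinfun_apply h b1)\<bar> + \<bar>Re (blinfun_apply h (\<i> *\<^sub>C b1))\<bar>"
      using cmod_le[of "blinfun_apply h b1"] by simp
    also have "\<dots> \<le> 2 * s" using bound[OF b1(1)] bound[OF b1(2)] by linarith
    finally have "cmod (blinfun_apply h b1) \<le> 2 * s" .
    moreover have "b = norm b *\<^sub>R b1" using False unfolding b1_def by simp
    then have "cmod (blinfun_apply h b) = norm b * cmod (blinfun_apply h b1)"
      by (metis blinfun.scaleR_right norm_ge_zero norm_scaleR abs_of_nonneg)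
    ultimately show ?thesis
      using mult_left_mono[of "cmod (blinfun_apply h b1)" "2 * s" "norm b"] by (simp add: mult.commute)
  qed
qed

lemma smulian:
  fixes a :: "'a::complex_normed_vector" and \<psi> :: "'a \<Rightarrow>\<^sub>L complex"
  assumes smooth: "frechet_smooth TYPE('a)" and a: "norm a = 1"
    and \<psi>: "\<psi> \<in> cdual" "norm \<psi> \<le> 1" "blinfun_apply \<psi> a = 1"
    and g: "\<And>n. g n \<in> cdual" "\<And>n. norm (g n) \<le> 1"
    and g_a: "(\<lambda>n. Re (blinfun_apply (g n) a)) \<longlonglongrightarrow> 1"
  shows "(\<lambda>n. norm (g n - \<psi>)) \<longlonglongrightarrow> 0"
proof (rule LIMSEQ_I)
  fix r :: real assume r: "r > 0"
  obtain L where L: "\<And>\<epsilon>. \<epsilon> > 0 \<Longrightarrow> \<exists>\<tau>>0. \<forall>(f :: 'a \<Rightarrow>\<^sub>L complex) b. norm f \<le> 1 \<longrightarrow> norm b = 1 \<longrightarrow>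
      \<bar>Re (blinfun_apply f b) + L b\<bar> < (1 - Re (blinfun_apply f a)) / \<tau> + \<epsilon>"
    using frechet_smooth_functional_estimate[OF smooth a] by blast
  obtain \<tau> where \<tau>: "\<tau> > 0" "\<And>(f :: 'a \<Rightarrow>\<^sub>L complex) b. norm f \<le> 1 \<Longrightarrow> norm b = 1 \<Longrightarrow>
      \<bar>Re (blinfun_apply f b) + L b\<bar> < (1 - Re (blinfun_apply f a)) / \<tau> + r / 8"
    using L[of "r / 8"] r by auto
  obtain M where M: "\<And>n. n \<ge> M \<Longrightarrow> norm (Re (blinfun_apply (g n) a) - 1) < \<tau> * (r / 8)"
    using LIMSEQ_D[OF g_a, of "\<tau> * (r / 8)"] \<tau>(1) r by auto
  have "norm (g n - \<psi>) < r" if n: "n \<ge> M" for n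
  proof -
    have "\<bar>Re (blinfun_apply (g n) a) - 1\<bar> < \<tau> * (r / 8)" using M[OF n] by simp
    then have "1 - Re (blinfun_apply (g n) a) < r / 8 * \<tau>" by (simp only: abs_less_iff mult.commute) linarith
    then have "(1 - Re (blinfun_apply (g n) a)) / \<tau> < r / 8"
      by (simp only: pos_divide_less_eq[OF \<tau>(1)])
    then have "\<bar>Re (blinfun_apply (g n - \<psi>) b)\<bar> \<le> 3 * r / 8" if b: "norm b = 1" for b
    proof -
      have "\<bar>Re (blinfun_apply (g n) b) + L b\<bar> < (1 - Re (blinfun_apply (g n) a)) / \<tau> + r / 8"
        by (rule \<tau>(2)[OF g(2) b])
      moreover have "\<bar>Re (blinfun_apply \<psi> b) + L b\<bar> < r / 8" using \<tau>(2)[OF \<psi>(2) b] \<psi>(3) by simp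
      ultimately show ?thesis using \<open>(1 - Re (blinfun_apply (g n) a)) / \<tau> < r / 8\<close>
        by (simp only: blinfun.diff_left minus_complex.sel)
    qed
    moreover have "g n - \<psi> \<in> cdual"
      using g(1) \<psi>(1) subspace_diff[OF complex_normed_subspace.subspace_S[OF complex_normed_subspace_cdual]]
      by blast
    ultimately have "norm (g n - \<psi>) \<le> 2 * (3 * r / 8)" using r by (intro cdual_norm_le_Re_bound) auto
    then show ?thesis using r by simp
  qed
  then show "\<exists>M. \<forall>n\<ge>M. norm (norm (g n - \<psi>) - 0) < r" by auto
qed

text \<open>The norming functionals at a vector where \<open>\<psi>\<close> attains its norm converge to \<open>\<psi>\<close> by
  Smulian's lemma.\<close>
lemma annih_approximation_unit:
  fixes \<kappa> :: "'x \<Rightarrow> 'a::{complex_normed_vector, banach} set" and \<psi> :: "'a \<Rightarrow>\<^sub>L complex"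
  assumes refl: "reflexive_space TYPE('a)" and smooth: "frechet_smooth TYPE('a)"
    and qvb: "quotient_vector_bundle X UNIV scaleC \<kappa>" and bb: "banach_bundle X UNIV scaleC \<kappa>"
    and x0: "x0 \<in> topspace X" and \<psi>: "\<psi> \<in> annih (\<kappa> x0)" "norm \<psi> = 1"
    and y: "\<forall>n. y n \<in> topspace X" and lim: "limitin X y x0 sequentially"
  shows "\<exists>g. (\<forall>n. g n \<in> annih (\<kappa> (y n))) \<and> (\<lambda>n. norm (g n - \<psi>)) \<longlonglongrightarrow> 0"
proof -
  interpret primal: quotient_bundle UNIV scaleC X \<kappa> by (rule quotient_bundle_primal[OF qvb])
  have \<psi>_cdual: "\<psi> \<in> cdual" using \<psi>(1) annih_subset_cdual by blast
  obtain a where a: "norm a \<le> 1" "blinfun_apply \<psi> a = 1"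
    using reflexive_norm_attained[OF refl \<psi>_cdual] \<psi>(2) by auto
  have "1 \<le> norm a" using norm_blinfun[of \<psi> a] a(2) \<psi>(2) by simp
  then have norm_a: "norm a = 1" using a(1) by simp
  have "1 \<le> infdist a (\<kappa> x0)"
    using norm_apply_le_infdist[OF \<psi>(1) primal.fibre_nonempty[OF x0], of a] a(2) \<psi>(2) by simp
  then have "infdist a (\<kappa> x0) = 1" using primal.infdist_fibre_le_norm[OF x0, of a] norm_a by simp
  moreover have "continuous_map X euclideanreal (\<lambda>x. infdist a (\<kappa> x))"
    by (rule primal.banach_bundle_infdist_continuous[OF bb]) simp
  ultimately have dist_lim: "(\<lambda>n. infdist a (\<kappa> (y n))) \<longlonglongrightarrow> 1"
    using continuous_map_limit[OF _ lim] by (fastforce simp: o_def)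
  have "\<forall>n. \<exists>\<phi>\<in>annih (\<kappa> (y n)). norm \<phi> \<le> 1 \<and> blinfun_apply \<phi> a = of_real (infdist a (\<kappa> (y n)))"
    using annih_norming_functional[OF primal.csubspace_fibre] y by blast
  then obtain g where g: "\<And>n. g n \<in> annih (\<kappa> (y n))" "\<And>n. norm (g n) \<le> 1"
    "\<And>n. blinfun_apply (g n) a = of_real (infdist a (\<kappa> (y n)))"
    by metis
  have "(\<lambda>n. Re (blinfun_apply (g n) a)) \<longlonglongrightarrow> 1" using dist_lim g(3) by simp
  moreover have "g n \<in> cdual" for n using g(1) annih_subset_cdual by blast
  ultimately have "(\<lambda>n. norm (g n - \<psi>)) \<longlonglongrightarrow> 0"
    using smulian[OF smooth norm_a \<psi>_cdual _ a(2), of g] g(2) \<psi>(2) by simp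
  then show ?thesis using g(1) by blast
qed

lemma infdist_annih_tendsto_zero:
  fixes \<kappa> :: "'x \<Rightarrow> 'a::{complex_normed_vector, banach} set" and \<psi> :: "'a \<Rightarrow>\<^sub>L complex"
  assumes refl: "reflexive_space TYPE('a)" and smooth: "frechet_smooth TYPE('a)"
    and qvb: "quotient_vector_bundle X UNIV scaleC \<kappa>" and bb: "banach_bundle X UNIV scaleC \<kappa>"
    and x0: "x0 \<in> topspace X" and \<psi>: "\<psi> \<in> annih (\<kappa> x0)"
    and y: "\<forall>n. y n \<in> topspace X" and lim: "limitin X y x0 sequentially"
  shows "(\<lambda>n. infdist \<psi> (annih (\<kappa> (y n)))) \<longlonglongrightarrow> 0"
proof (cases "\<psi> = 0")
  case True
  have "0 \<in> annih (\<kappa> (y n))" for n using csubspace_annih unfolding csubspace_in_def by blast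
  then show ?thesis using True by simp
next
  case False
  interpret cdual: complex_normed_subspace cdual dual_smul by (rule complex_normed_subspace_cdual)
  define c where "c = norm \<psi>"
  have c: "c > 0" using False unfolding c_def by simp
  define \<psi>1 where "\<psi>1 = dual_smul (of_real (1 / c)) \<psi>"
  have "\<psi>1 \<in> annih (\<kappa> x0)" using csubspace_annih \<psi> unfolding \<psi>1_def csubspace_in_def by blast
  moreover have "norm \<psi>1 = 1" using c unfolding \<psi>1_def c_def by (simp add: norm_dual_smul norm_divide)
  ultimately have \<psi>1: "\<psi>1 \<in> annih (\<kappa> x0)" "norm \<psi>1 = 1" by blast+
  obtain g where g: "\<forall>n. g n \<in> annih (\<kappa> (y n))" "(\<lambda>n. norm (g n - \<psi>1)) \<longlonglongrightarrow> 0"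
    using annih_approximation_unit[OF refl smooth qvb bb x0 \<psi>1 y lim] by blast
  have \<psi>_eq: "dual_smul (of_real c) \<psi>1 = \<psi>"
    unfolding \<psi>1_def using c by (intro blinfun_eqI) simp
  have "infdist \<psi> (annih (\<kappa> (y n))) \<le> c * norm (g n - \<psi>1)" for n
  proof -
    have "dual_smul (of_real c) (g n) \<in> annih (\<kappa> (y n))"
      using csubspace_annih g(1) unfolding csubspace_in_def by blast
    then have "infdist \<psi> (annih (\<kappa> (y n))) \<le> norm (dual_smul (of_real c) (g n) - \<psi>)"
      using infdist_le[of _ "annih (\<kappa> (y n))" \<psi>] by (simp add: dist_norm norm_minus_commute[of \<psi>])
    also have "dual_smul (of_real c) (g n) - \<psi> = dual_smul (of_real c) (g n - \<psi>1)"
      unfolding \<psi>_eq[symmetric] by (intro blinfun_eqI) (simp add: blinfun.diff_left algebra_simps)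
    finally show ?thesis using c by (simp add: norm_dual_smul)
  qed
  then have "norm (infdist \<psi> (annih (\<kappa> (y n)))) \<le> c * norm (g n - \<psi>1)" for n
    by (simp add: infdist_nonneg)
  then show ?thesis
    by (rule Lim_null_comparison[OF always_eventually[OF allI] tendsto_mult_right_zero[OF g(2)]])
qed

text \<open>For reflexive smooth \<open>A\<close> the distance to the fibres of \<open>\<kappa>\<^sup>\<vee>\<close> is sequentially, hence (by first
  countability) genuinely, upper semicontinuous.\<close>
lemma dual_quotient_vector_bundle_if_banach_bundle_smooth:
  fixes \<kappa> :: "'x \<Rightarrow> 'a::{complex_normed_vector, banach} set"
  assumes refl: "reflexive_space TYPE('a)" and smooth: "frechet_smooth TYPE('a)"
    and fc: "first_countable X"
    and qvb: "quotient_vector_bundle X UNIV scaleC \<kappa>" and bb: "banach_bundle X UNIV scaleC \<kappa>"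
  shows "quotient_vector_bundle X (cdual :: ('a \<Rightarrow>\<^sub>L complex) set) dual_smul (\<lambda>x. annih (\<kappa> x))"
proof (rule quotient_fibres.quotient_vector_bundle_if_infdist_usc[OF quotient_fibres_dual])
  interpret dual: quotient_fibres cdual dual_smul X "\<lambda>x. annih (\<kappa> x)" by (rule quotient_fibres_dual)
  fix \<phi> :: "'a \<Rightarrow>\<^sub>L complex" and t :: real
  show "openin X {y \<in> topspace X. infdist \<phi> (annih (\<kappa> y)) < t}"
  proof (rule first_countable_openin_sequentially[OF fc])
    fix x0 and y :: "nat \<Rightarrow> 'x"
    assume "x0 \<in> {y \<in> topspace X. infdist \<phi> (annih (\<kappa> y)) < t}"
      and y: "\<forall>n. y n \<in> topspace X" and lim: "limitin X y x0 sequentially"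
    then have x0: "x0 \<in> topspace X" and "infdist \<phi> (annih (\<kappa> x0)) < t" by auto
    then obtain \<psi> where \<psi>: "\<psi> \<in> annih (\<kappa> x0)" "dist \<phi> \<psi> < t"
      using infdist_less_iff[OF dual.fibre_nonempty[OF x0]] by blast
    have "(\<lambda>n. infdist \<psi> (annih (\<kappa> (y n)))) \<longlonglongrightarrow> 0"
      by (rule infdist_annih_tendsto_zero[OF refl smooth qvb bb x0 \<psi>(1) y lim])
    then have "eventually (\<lambda>n. infdist \<psi> (annih (\<kappa> (y n))) < t - dist \<phi> \<psi>) sequentially"
      using \<psi>(2) by (intro order_tendstoD(2)) auto
    then show "eventually (\<lambda>n. y n \<in> {y \<in> topspace X. infdist \<phi> (annih (\<kappa> y)) < t}) sequentially"
    proof eventually_elim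
      case (elim n)
      then show ?case using y infdist_triangle[of \<phi> "annih (\<kappa> (y n))" \<psi>] by auto
    qed
  qed auto
qed

theorem corollary7p16:
  fixes X :: "'x topology" and \<kappa> :: "'x \<Rightarrow> 'a::{complex_normed_vector, banach} set"
  assumes "Hausdorff_space X" and "first_countable X"
    and "quotient_vector_bundle X UNIV scaleC \<kappa>"
    and "\<forall>x\<in>topspace X. closed (\<kappa> x)"
  shows "(quotient_vector_bundle X (cdual :: ('a \<Rightarrow>\<^sub>L complex) set) dual_smul (\<lambda>x. annih (\<kappa> x)) \<longrightarrow>
            banach_bundle X UNIV scaleC \<kappa> \<and>
            banach_bundle X (cdual :: ('a \<Rightarrow>\<^sub>L complex) set) dual_smul (\<lambda>x. annih (\<kappa> x))) \<and>
         (reflexive_space TYPE('a) \<and> frechet_smooth TYPE('a) \<longrightarrow>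
            (banach_bundle X UNIV scaleC \<kappa> \<longleftrightarrow>
             banach_bundle X (cdual :: ('a \<Rightarrow>\<^sub>L complex) set) dual_smul (\<lambda>x. annih (\<kappa> x))))"
proof (rule conjI; rule impI)
  assume "quotient_vector_bundle X (cdual :: ('a \<Rightarrow>\<^sub>L complex) set) dual_smul (\<lambda>x. annih (\<kappa> x))"
  then show "banach_bundle X UNIV scaleC \<kappa> \<and>
      banach_bundle X (cdual :: ('a \<Rightarrow>\<^sub>L complex) set) dual_smul (\<lambda>x. annih (\<kappa> x))"
    using banach_bundles_if_dual_quotient_vector_bundle[OF assms(3,4)] by blast
next
  assume "reflexive_space TYPE('a) \<and> frechet_smooth TYPE('a)"
  then have refl: "reflexive_space TYPE('a)" and smooth: "frechet_smooth TYPE('a)" by blast+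
  show "banach_bundle X UNIV scaleC \<kappa> \<longleftrightarrow>
      banach_bundle X (cdual :: ('a \<Rightarrow>\<^sub>L complex) set) dual_smul (\<lambda>x. annih (\<kappa> x))"
  proof
    assume "banach_bundle X UNIV scaleC \<kappa>"
    then show "banach_bundle X (cdual :: ('a \<Rightarrow>\<^sub>L complex) set) dual_smul (\<lambda>x. annih (\<kappa> x))"
      using banach_bundles_if_dual_quotient_vector_bundle(2)[OF assms(3,4)]
        dual_quotient_vector_bundle_if_banach_bundle_smooth[OF refl smooth assms(2,3)] by blast
  next
    assume "banach_bundle X (cdual :: ('a \<Rightarrow>\<^sub>L complex) set) dual_smul (\<lambda>x. annih (\<kappa> x))"
    then show "banach_bundle X UNIV scaleC \<kappa>"
      using banach_bundles_if_dual_quotient_vector_bundle(1)[OF assms(3,4)]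
        dual_quotient_vector_bundle_if_banach_bundle by blast
  qed
qed

end
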